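(* Let $D\subset S$ and $A\in\Sigma^D$. Then $\mathcal H_A=\mathcal H^{(D)}_{A(D)}\cap\mathcal H_\pi$.
   Context: Let $\mathcal H$ be a complex Hilbert space. A projection is a bounded self-adjoint idempotent operator; $\wedge_\alpha p_\alpha$ is the projection onto the intersection of ranges. For $\phi\neq0$, $\hat\phi=\phi/\|\phi\|$. Let $S$ be a set; for each $t\in S$ let $\Gamma(t)$ be a countable set and for $a\in\Gamma(t)$ let $p^t_a$ be a projection on $\mathcal H$ with $\sum_{a\in\Gamma(t)}p^t_a=I$ (strong convergence); $p^{t_1,\dots,t_k}_{a_1,\dots,a_k}=\wedge_{i=1}^kp^{t_i}_{a_i}$. For $T\subset S$, let $\pi(T)=\{p^t_a:t\in T,a\in\Gamma(t)\}$ and $\pi=\pi(S)$. A family $\rho$ commutes on $\phi$ if $W\phi=V\phi$ whenever $W,V$ are finite products of elements of $\rho$ with the same factors (with multiplicity) in possibly different orders; $\mathcal H_\rho$ is the set of such $\phi$. Let $\Omega=\prod_{t\in S}\Gamma(t)$, $\Omega(D)=\prod_{t\in D}\Gamma(t)$, $X_t(\omega)=\omega_t$; $\Sigma$ (resp. $\Sigma(D)$) is the σ-algebra on $\Omega$ (resp. $\Omega(D)$) generated by the sets $\{X_t=a\}$, $t\in S$ (resp. $t\in D$); $\Sigma^D$ is the σ-algebra on $\Omega$ generated by $\{X_t:t\in D\}$. For $\phi\in\mathcal H_\pi\setminus\{0\}$, $\mathbb P_\phi$ is the unique probability measure on $(\Omega,\Sigma)$ with $\mathbb P_\phi(X_{t_i}=a_i,\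 i\le k)=\|p^{t_1,\dots,t_k}_{a_1,\dots,a_k}\hat\phi\|^2$ for all $t_i\in S$, $a_i$; for $\phi\in\mathcal H_{\pi(D)}\setminus\{0\}$, $\mathbb P^{(D)}_\phi$ is the analogous measure on $(\Omega(D),\Sigma(D))$ for $t_i\in D$. For $A\in\Sigma$, $\mathcal H_A=\{\phi\in\mathcal H_\pi:\phi=0\text{ or }\mathbb P_\phi(A)=1\}$; for $B\in\Sigma(D)$, $\mathcal H^{(D)}_B=\{\phi\in\mathcal H_{\pi(D)}:\phi=0\text{ or }\mathbb P^{(D)}_\phi(B)=1\}$. Every $A\in\Sigma^D$ is $D$-determined (two elements of $\Omega$ with the same restriction to $D$ are both in $A$ or both not), and $A(D)=\{\omega\in\Omega(D):\omega_t=\omega'_t\text{ for all }t\in D\text{ for some }\omega'\in A\}$, which lies in $\Sigma(D)$. *)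

theory Defs
  imports "HOL-Probability.Probability"
begin

text \<open>The distribution has no complex vector space class, so we introduce one:
 a real normed vector space with a compatible complex scalar multiplication and
 a complex inner product (linear in the second, conjugate-linear in the first
 argument) inducing the norm.\<close>

class complex_inner = real_normed_vector +
  fixes scaleC :: "complex \<Rightarrow> 'a \<Rightarrow> 'a"
    and cinner :: "'a \<Rightarrow> 'a \<Rightarrow> complex"
  assumes scaleC_add_right: "scaleC c (x + y) = scaleC c x + scaleC c y"
    and scaleC_add_left: "scaleC (c + d) x = scaleC c x + scaleC d x"
    and scaleC_scaleC: "scaleC c (scaleC d x) = scaleC (c * d) x"
    and scaleC_one: "scaleC 1 x = x"
    and scaleR_scaleC: "scaleR r x = scaleC (complex_of_real r) x"
    and cinner_add_left: "cinner (x + y) z = cinner x z + cinner y z"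
    and cinner_scaleC_left: "cinner (scaleC c x) y = cnj c * cinner x y"
    and cinner_commute: "cinner x y = cnj (cinner y x)"
    and cinner_self_nonneg: "Im (cinner x x) = 0 \<and> Re (cinner x x) \<ge> 0"
    and cinner_self_eq_zero: "cinner x x = 0 \<longleftrightarrow> x = 0"
    and norm_eq_sqrt_cinner: "norm x = sqrt (Re (cinner x x))"

class chilbert_space = complex_inner + complete_space

definition bounded_clinear_op :: "('h::complex_inner \<Rightarrow> 'h) \<Rightarrow> bool" where
  "bounded_clinear_op f \<longleftrightarrow>
     (\<forall>x y. f (x + y) = f x + f y) \<and> (\<forall>c x. f (scaleC c x) = scaleC c (f x)) \<and>
     (\<exists>K. \<forall>x. norm (f x) \<le> norm x * K)"

definition is_projection :: "('h::complex_inner \<Rightarrow> 'h) \<Rightarrow> bool" where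
  "is_projection f \<longleftrightarrow> bounded_clinear_op f \<and>
     (\<forall>x y. cinner (f x) y = cinner x (f y)) \<and> f \<circ> f = f"

definition proj_meet :: "('h::complex_inner \<Rightarrow> 'h) list \<Rightarrow> ('h \<Rightarrow> 'h)" where
  "proj_meet ps = (THE q. is_projection q \<and> range q = (\<Inter>f\<in>set ps. range f))"

definition pjoint :: "('s \<Rightarrow> 'a \<Rightarrow> ('h::complex_inner \<Rightarrow> 'h)) \<Rightarrow> 's list \<Rightarrow> 'a list \<Rightarrow> ('h \<Rightarrow> 'h)" where
  "pjoint p ts as = proj_meet (map (\<lambda>(t, a). p t a) (zip ts as))"

definition op_prod :: "('h \<Rightarrow> 'h) list \<Rightarrow> ('h \<Rightarrow> 'h)" where
  "op_prod xs = foldr (\<circ>) xs id"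

definition commutes_on :: "('h \<Rightarrow> 'h) set \<Rightarrow> 'h \<Rightarrow> bool" where
  "commutes_on \<rho> \<phi> \<longleftrightarrow> (\<forall>xs ys. set xs \<subseteq> \<rho> \<and> set ys \<subseteq> \<rho> \<and> mset xs = mset ys
      \<longrightarrow> op_prod xs \<phi> = op_prod ys \<phi>)"

definition Hcomm :: "('h \<Rightarrow> 'h) set \<Rightarrow> 'h set" where
  "Hcomm \<rho> = {\<phi>. commutes_on \<rho> \<phi>}"

definition pfam :: "('s \<Rightarrow> 'a \<Rightarrow> ('h \<Rightarrow> 'h)) \<Rightarrow> ('s \<Rightarrow> 'a set) \<Rightarrow> 's set \<Rightarrow> ('h \<Rightarrow> 'h) set" where
  "pfam p \<Gamma> T = {p t a | t a. t \<in> T \<and> a \<in> \<Gamma> t}"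

definition Omega :: "('s \<Rightarrow> 'a set) \<Rightarrow> 's set \<Rightarrow> ('s \<Rightarrow> 'a) set" where
  "Omega \<Gamma> D = PiE D \<Gamma>"

definition Sigma_D :: "('s \<Rightarrow> 'a set) \<Rightarrow> 's set \<Rightarrow> ('s \<Rightarrow> 'a) set set" where
  "Sigma_D \<Gamma> D = sigma_sets (Omega \<Gamma> D)
     {{\<omega> \<in> Omega \<Gamma> D. \<omega> t = a} | t a. t \<in> D \<and> a \<in> \<Gamma> t}"

text \<open>\<open>\<Sigma>^D\<close>: sigma algebra on \<open>\<Omega> = \<Omega>(S)\<close> generated by the coordinate maps
 \<open>X_t\<close>, \<open>t \<in> D\<close> (each \<open>\<Gamma>(t)\<close> carrying the discrete sigma algebra).\<close>
definition Sigma_sup :: "('s \<Rightarrow> 'a set) \<Rightarrow> 's set \<Rightarrow> 's set \<Rightarrow> ('s \<Rightarrow> 'a) set set" where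
  "Sigma_sup \<Gamma> S D = sigma_sets (Omega \<Gamma> S)
     {{\<omega> \<in> Omega \<Gamma> S. \<omega> t \<in> B} | t B. t \<in> D \<and> B \<subseteq> \<Gamma> t}"

definition cyl :: "('s \<Rightarrow> 'a set) \<Rightarrow> 's set \<Rightarrow> 's list \<Rightarrow> 'a list \<Rightarrow> ('s \<Rightarrow> 'a) set" where
  "cyl \<Gamma> D ts as = {\<omega> \<in> Omega \<Gamma> D. \<forall>i < length ts. \<omega> (ts ! i) = as ! i}"

definition unitvec :: "'h::complex_inner \<Rightarrow> 'h" where
  "unitvec \<phi> = scaleC (complex_of_real (1 / norm \<phi>)) \<phi>"

definition Pphi :: "('s \<Rightarrow> 'a \<Rightarrow> ('h::complex_inner \<Rightarrow> 'h)) \<Rightarrow> ('s \<Rightarrow> 'a set) \<Rightarrow> 's set \<Rightarrow> 'h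
    \<Rightarrow> ('s \<Rightarrow> 'a) measure" where
  "Pphi p \<Gamma> D \<phi> = (THE M. prob_space M \<and> space M = Omega \<Gamma> D \<and> sets M = Sigma_D \<Gamma> D \<and>
     (\<forall>ts as. length ts = length as \<and> set ts \<subseteq> D \<and> (\<forall>i < length ts. as ! i \<in> \<Gamma> (ts ! i))
        \<longrightarrow> measure M (cyl \<Gamma> D ts as) = (norm (pjoint p ts as (unitvec \<phi>)))\<^sup>2))"

definition Hev :: "('s \<Rightarrow> 'a \<Rightarrow> ('h::complex_inner \<Rightarrow> 'h)) \<Rightarrow> ('s \<Rightarrow> 'a set) \<Rightarrow> 's set
    \<Rightarrow> ('s \<Rightarrow> 'a) set \<Rightarrow> 'h set" where
  "Hev p \<Gamma> D B = {\<phi> \<in> Hcomm (pfam p \<Gamma> D). \<phi> = 0 \<or> measure (Pphi p \<Gamma> D \<phi>) B = 1}"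

definition restr_event :: "('s \<Rightarrow> 'a set) \<Rightarrow> 's set \<Rightarrow> ('s \<Rightarrow> 'a) set \<Rightarrow> ('s \<Rightarrow> 'a) set" where
  "restr_event \<Gamma> D A = {\<omega> \<in> Omega \<Gamma> D. \<exists>\<omega>' \<in> A. \<forall>t \<in> D. \<omega> t = \<omega>' t}"

end

theory Submission
  imports Defs
begin

(*
  Let phi be a nonzero vector on which pi commutes and u = phi / |phi|. On u the meet
  projection p^{t_1..t_k}_{a_1..a_k} acts as the product of its factors, taken in any order;
  the product vanishes when two factors at the same index t carry different outcomes, since
  the p^t_a (a in Gamma(t)) are mutually orthogonal. Hence the weights
  |prod_{t in J} p^t_{omega t} u|^2 are probability distributions on the finite products
  Omega(J), consistent under marginalisation because sum_a |p^t_a v|^2 = |v|^2.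
  Kolmogorov's extension theorem gives a measure on Omega with the prescribed cylinder
  probabilities; by uniqueness on the intersection-stable class of cylinders it is P_phi, and
  its image under restriction to D is P^(D)_phi. An event A in Sigma^D is the preimage of A(D)
  under this restriction, so P_phi(A) = P^(D)_phi(A(D)); since pi(D) is part of pi, this
  identifies H_A with the vectors of H^(D)_{A(D)} on which pi commutes.
*)

section \<open>Complex inner product spaces\<close>

declare cinner_self_eq_zero [simp]

interpretation scaleC: module "scaleC :: complex \<Rightarrow> 'a::complex_inner \<Rightarrow> 'a"
  by standard (simp_all add: scaleC_add_right scaleC_add_left scaleC_scaleC scaleC_one)

lemma cinner_add_right: "cinner z (x + y) = cinner z x + cinner (z::'a::complex_inner) y"
  by (metis cinner_add_left cinner_commute complex_cnj_add)

interpretation cinner_left: additive "\<lambda>x::'a::complex_inner. cinner x y" for y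
  by standard (rule cinner_add_left)

interpretation cinner_right: additive "cinner (x::'a::complex_inner)" for x
  by standard (rule cinner_add_right)

declare cinner_left.zero [simp] cinner_right.zero [simp]

lemma cinner_scaleC_right: "cinner x (scaleC c y) = c * cinner (x::'a::complex_inner) y"
  by (metis cinner_commute cinner_scaleC_left complex_cnj_cnj complex_cnj_mult)

lemma power2_norm_eq_cinner: "(norm (x::'a::complex_inner))\<^sup>2 = Re (cinner x x)"
  using norm_eq_sqrt_cinner[of x] cinner_self_nonneg[of x] by simp

lemma cinner_self: "cinner (x::'a::complex_inner) x = complex_of_real ((norm x)\<^sup>2)"
  using cinner_self_nonneg[of x] by (simp add: power2_norm_eq_cinner complex_eq_iff)

lemma cinner_scaleR_right: "cinner (x::'a::complex_inner) (scaleR r y) = scaleR r (cinner x y)"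
  by (simp add: scaleR_scaleC cinner_scaleC_right scaleR_conv_of_real)

lemma norm_scaleC: "norm (scaleC c (x::'a::complex_inner)) = cmod c * norm x"
proof -
  have "(norm (scaleC c x))\<^sup>2 = Re ((c * cnj c) * cinner x x)"
    by (simp add: power2_norm_eq_cinner cinner_scaleC_left cinner_scaleC_right ac_simps)
  also have "\<dots> = (cmod c * norm x)\<^sup>2"
    by (simp only: complex_norm_square[symmetric] cinner_self of_real_mult[symmetric]
        Re_complex_of_real power_mult_distrib)
  finally show ?thesis by simp
qed

lemma power2_norm_remove_component:
  fixes x y :: "'a::complex_inner"
  assumes "y \<noteq> 0"
  shows "(norm (x - scaleC (cinner y x / complex_of_real ((norm y)\<^sup>2)) y))\<^sup>2
     = (norm x)\<^sup>2 - (cmod (cinner y x))\<^sup>2 / (norm y)\<^sup>2"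
proof -
  define w where "w = cinner y x"
  define n where "n = (norm y)\<^sup>2"
  define l where "l = w / complex_of_real n"
  have n: "n > 0" using assms by (simp add: n_def)
  have yy: "cinner y y = complex_of_real n" by (simp add: cinner_self n_def)
  have ww: "w * cnj w = complex_of_real ((cmod w)\<^sup>2)" by (metis complex_norm_square)
  have "cinner (x - scaleC l y) (x - scaleC l y)
      = cinner x x - l * cnj w - cnj l * w + cnj l * l * cinner y y"
    by (simp add: cinner_left.diff cinner_right.diff cinner_scaleC_left cinner_scaleC_right
        cinner_commute[of x y] w_def algebra_simps)
  also have "\<dots> = complex_of_real ((norm x)\<^sup>2 - (cmod w)\<^sup>2 / n)"
    using n by (simp add: cinner_self[of x] l_def yy ww field_simps power2_eq_square)
  finally show ?thesis by (simp add: power2_norm_eq_cinner l_def w_def n_def)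
qed

lemma norm_cinner_le: "cmod (cinner (x::'a::complex_inner) y) \<le> norm x * norm y"
proof (cases "y = 0")
  case False
  have "0 \<le> (norm x)\<^sup>2 - (cmod (cinner y x))\<^sup>2 / (norm y)\<^sup>2"
    using power2_norm_remove_component[OF False, of x] by (metis zero_le_power2)
  then have "(cmod (cinner y x))\<^sup>2 \<le> (norm x * norm y)\<^sup>2"
    using False by (simp add: field_simps)
  then have "cmod (cinner y x) \<le> norm x * norm y"
    by (rule power2_le_imp_le) simp
  then show ?thesis by (metis cinner_commute complex_mod_cnj)
qed simp

lemma bounded_linear_cinner_right: "bounded_linear (cinner (x::'a::complex_inner))"
proof (rule bounded_linear_intro[where K = "norm x"])
  show "norm (cinner x y) \<le> norm y * norm x" for y
    using norm_cinner_le[of x y] by (simp add: mult.commute)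
qed (simp_all add: cinner_add_right cinner_scaleR_right)

lemma parallelogram_law:
  "(norm (u + v))\<^sup>2 + (norm (u - v))\<^sup>2 = 2 * (norm u)\<^sup>2 + 2 * (norm (v::'a::complex_inner))\<^sup>2"
  by (simp add: power2_norm_eq_cinner cinner_add_left cinner_add_right cinner_left.diff
      cinner_right.diff)

lemma pythagoras:
  fixes u v :: "'a::complex_inner"
  assumes "cinner u v = 0"
  shows "(norm (u + v))\<^sup>2 = (norm u)\<^sup>2 + (norm v)\<^sup>2"
proof -
  have "cinner v u = 0" using assms by (metis cinner_commute complex_cnj_zero)
  then show ?thesis using assms
    by (simp add: power2_norm_eq_cinner cinner_add_left cinner_add_right)
qed

lemma norm_unitvec: "\<phi> \<noteq> 0 \<Longrightarrow> norm (unitvec \<phi>) = 1"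
  by (simp add: unitvec_def norm_scaleC norm_divide)

section \<open>Projections\<close>

definition csubspace :: "'h::complex_inner set \<Rightarrow> bool" where
  "csubspace C \<longleftrightarrow> 0 \<in> C \<and> (\<forall>x\<in>C. \<forall>y\<in>C. x + y \<in> C) \<and> (\<forall>c. \<forall>x\<in>C. scaleC c x \<in> C)"

lemma csubspace_diff: "csubspace C \<Longrightarrow> x \<in> C \<Longrightarrow> y \<in> C \<Longrightarrow> x - y \<in> C"
  unfolding csubspace_def by (metis diff_conv_add_uminus scaleC_one scaleC.scale_minus_left)

lemma csubspace_INT: "(\<And>f. f \<in> F \<Longrightarrow> csubspace (A f)) \<Longrightarrow> csubspace (\<Inter>f\<in>F. A f)"
  unfolding csubspace_def by simp

context
  fixes f :: "'h::complex_inner \<Rightarrow> 'h"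
  assumes f: "is_projection f"
begin

lemma projection_add: "f (x + y) = f x + f y"
  using f by (simp add: is_projection_def bounded_clinear_op_def)

lemma projection_scaleC: "f (scaleC c x) = scaleC c (f x)"
  using f by (simp add: is_projection_def bounded_clinear_op_def)

lemma projection_idem: "f (f x) = f x"
  using f by (simp add: is_projection_def fun_eq_iff)

lemma projection_adjoint: "cinner (f x) y = cinner x (f y)"
  using f by (simp add: is_projection_def)

lemma projection_cinner_self: "cinner x (f x) = complex_of_real ((norm (f x))\<^sup>2)"
  by (metis projection_adjoint projection_idem cinner_self)

lemma range_projection: "range f = {x. f x = x}"
  by (auto simp: projection_idem) (metis rangeI)

lemma bounded_linear_projection: "bounded_linear f"
proof -
  obtain K where "\<And>x. norm (f x) \<le> norm x * K"
    using f by (auto simp: is_projection_def bounded_clinear_op_def)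
  then show ?thesis
    by (intro bounded_linear_intro) (simp_all add: projection_add scaleR_scaleC projection_scaleC)
qed

lemma closed_range_projection: "closed (range f)"
  unfolding range_projection
  using linear_continuous_on[OF bounded_linear_projection]
  by (intro closed_Collect_eq) simp_all

lemma csubspace_range_projection: "csubspace (range f)"
proof -
  interpret additive f by standard (rule projection_add)
  show ?thesis
    unfolding csubspace_def range_projection by (simp add: zero add projection_scaleC)
qed

end

lemma csubspace_midpoint_bound:
  fixes C :: "'h::complex_inner set"
  assumes C: "csubspace C" and ab: "a \<in> C" "b \<in> C"
    and d: "\<And>c. c \<in> C \<Longrightarrow> d \<le> (norm (x - c))\<^sup>2"
  shows "(norm (a - b))\<^sup>2 \<le> 2 * ((norm (x - a))\<^sup>2 - d) + 2 * ((norm (x - b))\<^sup>2 - d)"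
proof -
  let ?m = "scaleC (1/2) (a + b)"
  have "?m \<in> C" using C ab unfolding csubspace_def by auto
  then have "d \<le> (norm (x - ?m))\<^sup>2" by (rule d)
  moreover have "scaleR 2 (x - ?m) = scaleC 2 x - (a + b)"
    by (simp add: scaleR_scaleC scaleC.scale_right_diff_distrib scaleC_scaleC)
  then have "x - a + (x - b) = scaleR 2 (x - ?m)"
    by (metis one_add_one scaleC_add_left scaleC_one add_diff_add)
  then have "(norm (x - a + (x - b)))\<^sup>2 = 4 * (norm (x - ?m))\<^sup>2"
    by (simp add: power_mult_distrib)
  ultimately show ?thesis
    using parallelogram_law[of "x - a" "x - b"] by (simp add: norm_minus_commute)
qed

lemma minimising_sequence_Cauchy:
  fixes C :: "'h::complex_inner set"
  assumes C: "csubspace C" and d: "\<And>c. c \<in> C \<Longrightarrow> d \<le> (norm (x - c))\<^sup>2"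
    and cs: "\<And>n. cs n \<in> C" "\<And>n. (norm (x - cs n))\<^sup>2 < d + 1 / Suc n"
  shows "Cauchy cs"
proof (rule metric_CauchyI)
  fix e :: real assume e: "e > 0"
  obtain N :: nat where N: "4 / e\<^sup>2 < N" using reals_Archimedean2 by blast
  have N_pos: "0 < real N" using N e by (smt (verit) divide_pos_pos zero_less_power)
  have "dist (cs m) (cs n) < e" if "N \<le> m" "N \<le> n" for m n
  proof -
    have "1 / real (Suc m) < 1 / N" "1 / real (Suc n) < 1 / N"
      using that N_pos by (simp_all add: frac_less2)
    then have "(norm (cs m - cs n))\<^sup>2 < 4 / N"
      using csubspace_midpoint_bound[OF C cs(1) cs(1) d, of m n] cs(2)[of m] cs(2)[of n] by simp
    also have "\<dots> < e\<^sup>2" using N e N_pos by (simp add: field_simps)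
    finally show ?thesis
      using e by (simp add: dist_norm) (meson abs_le_square_iff less_le_not_le not_le
          power2_less_imp_less)
  qed
  then show "\<exists>N. \<forall>m\<ge>N. \<forall>n\<ge>N. dist (cs m) (cs n) < e" by blast
qed

lemma closest_point_exists:
  fixes C :: "'h::chilbert_space set"
  assumes C: "csubspace C" "closed C"
  shows "\<exists>c\<in>C. \<forall>c'\<in>C. (norm (x - c))\<^sup>2 \<le> (norm (x - c'))\<^sup>2"
proof -
  define d where "d = (INF c\<in>C. (norm (x - c))\<^sup>2)"
  have ne: "C \<noteq> {}" using C by (auto simp: csubspace_def)
  have bdd: "bdd_below ((\<lambda>c. (norm (x - c))\<^sup>2) ` C)" by (auto intro: bdd_belowI[of _ 0])
  have d_le: "d \<le> (norm (x - c))\<^sup>2" if "c \<in> C" for c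
    unfolding d_def using bdd that by (rule cINF_lower)
  have "(INF c\<in>C. (norm (x - c))\<^sup>2) < d + 1 / Suc n" for n
    unfolding d_def by simp
  then have "\<exists>c\<in>C. (norm (x - c))\<^sup>2 < d + 1 / Suc n" for n
    using cINF_less_iff[OF ne bdd] by blast
  then obtain cs where cs: "\<And>n. cs n \<in> C" "\<And>n. (norm (x - cs n))\<^sup>2 < d + 1 / Suc n"
    by metis
  then obtain c where lim: "cs \<longlonglongrightarrow> c"
    using minimising_sequence_Cauchy[OF C(1) d_le] Cauchy_convergent_iff convergent_def by blast
  have "(\<lambda>n. (norm (x - cs n))\<^sup>2) \<longlonglongrightarrow> (norm (x - c))\<^sup>2"
    by (intro tendsto_intros lim)
  moreover have "(\<lambda>n. d + 1 / Suc n) \<longlonglongrightarrow> d + 0"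
    by (intro tendsto_intros) (use LIMSEQ_inverse_real_of_nat in \<open>simp add: inverse_eq_divide\<close>)
  ultimately have "(norm (x - c))\<^sup>2 \<le> d"
    using cs(2) by (intro LIMSEQ_le) (auto intro: less_imp_le)
  moreover have "c \<in> C" using closed_sequentially[OF C(2)] cs(1) lim by blast
  ultimately show ?thesis using d_le by (blast intro: order_trans)
qed

lemma closest_point_orthogonal:
  fixes C :: "'h::complex_inner set"
  assumes C: "csubspace C" and c: "c \<in> C" "\<And>c'. c' \<in> C \<Longrightarrow> (norm (x - c))\<^sup>2 \<le> (norm (x - c'))\<^sup>2"
    and y: "y \<in> C"
  shows "cinner y (x - c) = 0"
proof (cases "y = 0")
  case False
  define l where "l = cinner y (x - c) / complex_of_real ((norm y)\<^sup>2)"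
  have "c + scaleC l y \<in> C" using C y c unfolding csubspace_def by auto
  then have "(norm (x - c))\<^sup>2 \<le> (norm ((x - c) - scaleC l y))\<^sup>2"
    using c(2) by (simp add: diff_diff_eq)
  also have "\<dots> = (norm (x - c))\<^sup>2 - (cmod (cinner y (x - c)))\<^sup>2 / (norm y)\<^sup>2"
    unfolding l_def by (rule power2_norm_remove_component[OF False])
  finally have "(cmod (cinner y (x - c)))\<^sup>2 \<le> 0" using False by (simp add: divide_le_0_iff)
  then show ?thesis by simp
qed simp

lemma orthogonal_decomposition_unique:
  fixes C :: "'h::complex_inner set"
  assumes "csubspace C" "c1 \<in> C" "\<forall>c\<in>C. cinner c (x - c1) = 0" "c2 \<in> C" "\<forall>c\<in>C. cinner c (x - c2) = 0"
  shows "c1 = c2"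
proof -
  have "c1 - c2 \<in> C" using assms(1,2,4) by (rule csubspace_diff)
  then have "cinner (c1 - c2) (x - c2) - cinner (c1 - c2) (x - c1) = 0" using assms(3,5) by simp
  then have "cinner (c1 - c2) (c1 - c2) = 0" by (simp add: cinner_right.diff[symmetric])
  then show ?thesis by simp
qed

definition orth_proj :: "'h::complex_inner set \<Rightarrow> 'h \<Rightarrow> 'h" where
  "orth_proj C x = (THE c. c \<in> C \<and> (\<forall>c'\<in>C. cinner c' (x - c) = 0))"

context
  fixes C :: "'h::chilbert_space set"
  assumes C: "csubspace C" "closed C"
begin

lemma orth_proj: "orth_proj C x \<in> C" "y \<in> C \<Longrightarrow> cinner y (x - orth_proj C x) = 0"
proof -
  obtain c where c: "c \<in> C" "\<forall>c'\<in>C. (norm (x - c))\<^sup>2 \<le> (norm (x - c'))\<^sup>2"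
    using closest_point_exists[OF C] by blast
  then have c_orth: "\<forall>y\<in>C. cinner y (x - c) = 0"
    using closest_point_orthogonal[OF C(1)] by blast
  have "orth_proj C x \<in> C \<and> (\<forall>y\<in>C. cinner y (x - orth_proj C x) = 0)"
    unfolding orth_proj_def
  proof (rule theI[where a = c])
    show "c \<in> C \<and> (\<forall>y\<in>C. cinner y (x - c) = 0)" using c(1) c_orth by blast
    show "c' = c" if "c' \<in> C \<and> (\<forall>y\<in>C. cinner y (x - c') = 0)" for c'
      using orthogonal_decomposition_unique[OF C(1) _ _ c(1) c_orth] that by blast
  qed
  then show "orth_proj C x \<in> C" "y \<in> C \<Longrightarrow> cinner y (x - orth_proj C x) = 0" by auto
qed

lemma orth_proj_eqI: "c \<in> C \<Longrightarrow> (\<And>c'. c' \<in> C \<Longrightarrow> cinner c' (x - c) = 0) \<Longrightarrow> orth_proj C x = c"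
  using orthogonal_decomposition_unique[OF C(1)] orth_proj by blast

lemma orth_proj_add: "orth_proj C (x + y) = orth_proj C x + orth_proj C y"
proof (rule orth_proj_eqI)
  show "orth_proj C x + orth_proj C y \<in> C" using C(1) orth_proj(1) by (simp add: csubspace_def)
  show "cinner c (x + y - (orth_proj C x + orth_proj C y)) = 0" if "c \<in> C" for c
    using orth_proj(2)[OF that] by (simp add: add_diff_add cinner_add_right)
qed

lemma orth_proj_scaleC: "orth_proj C (scaleC a x) = scaleC a (orth_proj C x)"
proof (rule orth_proj_eqI)
  show "scaleC a (orth_proj C x) \<in> C" using C(1) orth_proj(1) by (simp add: csubspace_def)
  show "cinner c (scaleC a x - scaleC a (orth_proj C x)) = 0" if "c \<in> C" for c
    using orth_proj(2)[OF that]
    by (simp add: cinner_scaleC_right flip: scaleC.scale_right_diff_distrib)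
qed

lemma norm_orth_proj_le: "norm (orth_proj C x) \<le> norm x"
proof -
  have "(norm (orth_proj C x + (x - orth_proj C x)))\<^sup>2
      = (norm (orth_proj C x))\<^sup>2 + (norm (x - orth_proj C x))\<^sup>2"
    by (intro pythagoras orth_proj)
  then have "(norm (orth_proj C x))\<^sup>2 \<le> (norm x)\<^sup>2" by simp
  then show ?thesis by (rule power2_le_imp_le) simp
qed

lemma orth_proj_adjoint: "cinner (orth_proj C x) y = cinner x (orth_proj C y)"
proof -
  have "cinner (orth_proj C x) (y - orth_proj C y) = 0" by (intro orth_proj)
  moreover have "cinner (x - orth_proj C x) (orth_proj C y) = 0"
    by (metis cinner_commute complex_cnj_zero orth_proj)
  ultimately show ?thesis by (simp add: cinner_left.diff cinner_right.diff)
qed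

lemma is_projection_orth_proj: "is_projection (orth_proj C)"
proof -
  have "orth_proj C (orth_proj C x) = orth_proj C x" for x
    by (intro orth_proj_eqI orth_proj) simp
  then show ?thesis
    unfolding is_projection_def bounded_clinear_op_def
    using orth_proj_add orth_proj_scaleC orth_proj_adjoint norm_orth_proj_le
    by (auto intro!: exI[of _ 1])
qed

lemma range_orth_proj: "range (orth_proj C) = C"
proof -
  have "orth_proj C c = c" if "c \<in> C" for c
    using that by (intro orth_proj_eqI) simp_all
  then have "C \<subseteq> range (orth_proj C)" by (metis rangeI subsetI)
  then show ?thesis using orth_proj(1) by blast
qed

end

lemma projection_eqI_range:
  fixes q1 q2 :: "'h::complex_inner \<Rightarrow> 'h"
  assumes q: "is_projection q1" "is_projection q2" and range: "range q1 = range q2"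
  shows "q1 = q2"
proof
  fix x
  have q1_q2: "q1 (q2 y) = q2 y" and q2_q1: "q2 (q1 y) = q1 y" for y
    using range range_projection[OF q(1)] range_projection[OF q(2)] by blast+
  have "cinner y (q2 x) = cinner y (q1 x)" for y
    by (metis q1_q2 q2_q1 projection_adjoint[OF q(1)] projection_adjoint[OF q(2)])
  then have "cinner (q1 x - q2 x) (q1 x - q2 x) = 0" by (simp add: cinner_right.diff)
  then show "q1 x = q2 x" by simp
qed

lemma proj_meet:
  fixes ps :: "('h::chilbert_space \<Rightarrow> 'h) list"
  assumes "\<forall>f\<in>set ps. is_projection f"
  shows "is_projection (proj_meet ps)" "range (proj_meet ps) = (\<Inter>f\<in>set ps. range f)"
proof -
  let ?R = "\<Inter>f\<in>set ps. range f"
  have R: "csubspace ?R" "closed ?R"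
    using assms csubspace_range_projection closed_range_projection
    by (blast intro: csubspace_INT)+
  have "is_projection (proj_meet ps) \<and> range (proj_meet ps) = ?R"
    unfolding proj_meet_def
  proof (rule theI[of _ "orth_proj ?R"])
    show "is_projection (orth_proj ?R) \<and> range (orth_proj ?R) = ?R"
      using is_projection_orth_proj[OF R] range_orth_proj[OF R] by blast
    show "q = orth_proj ?R" if "is_projection q \<and> range q = ?R" for q
      using that is_projection_orth_proj[OF R] range_orth_proj[OF R]
      by (metis projection_eqI_range)
  qed
  then show "is_projection (proj_meet ps)" "range (proj_meet ps) = ?R" by auto
qed

lemma projection_apply_eqI:
  fixes q :: "'h::complex_inner \<Rightarrow> 'h"
  assumes q: "is_projection q" and \<psi>: "\<psi> \<in> range q" "\<And>y. y \<in> range q \<Longrightarrow> cinner y \<psi> = cinner y \<phi>"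
  shows "q \<phi> = \<psi>"
proof -
  have diff_in: "q \<phi> - \<psi> \<in> range q"
    using q \<psi>(1) csubspace_range_projection csubspace_diff by blast
  have "cinner y (q \<phi>) = cinner y \<phi>" if "y \<in> range q" for y
    using that projection_adjoint[OF q, of y \<phi>] range_projection[OF q] by auto
  then have "cinner (q \<phi> - \<psi>) (q \<phi> - \<psi>) = 0"
    using diff_in \<psi>(2)[OF diff_in] by (simp add: cinner_right.diff)
  then show ?thesis by simp
qed

section \<open>Products of commuting projections\<close>

lemma op_prod_Nil [simp]: "op_prod [] = id"
  by (simp add: op_prod_def)

lemma op_prod_Cons [simp]: "op_prod (f # xs) x = f (op_prod xs x)"
  by (simp add: op_prod_def)

lemma commutes_on_mono: "commutes_on \<rho> \<phi> \<Longrightarrow> \<rho>' \<subseteq> \<rho> \<Longrightarrow> commutes_on \<rho>' \<phi>"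
  unfolding commutes_on_def by blast

context
  fixes \<rho> :: "('h \<Rightarrow> 'h) set" and \<phi> :: 'h
  assumes comm: "commutes_on \<rho> \<phi>"
begin

lemma commutes_on_permute:
  assumes "set xs \<subseteq> \<rho>" "mset xs = mset ys"
  shows "op_prod xs \<phi> = op_prod ys \<phi>"
proof -
  have "set ys \<subseteq> \<rho>" using assms mset_eq_setD by blast
  then show ?thesis using comm assms unfolding commutes_on_def by blast
qed

lemma commutes_on_pull_front:
  assumes "set xs \<subseteq> \<rho>" "f \<in> set xs"
  shows "op_prod xs \<phi> = f (op_prod (remove1 f xs) \<phi>)"
  using commutes_on_permute[OF assms(1), of "f # remove1 f xs"] assms(2) by simp

context
  assumes idem: "\<And>f. f \<in> \<rho> \<Longrightarrow> f \<circ> f = f"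
begin

lemma commutes_on_fixed:
  assumes "set xs \<subseteq> \<rho>" "f \<in> set xs"
  shows "f (op_prod xs \<phi>) = op_prod xs \<phi>"
proof -
  have "f \<circ> f = f" using idem assms by blast
  then show ?thesis unfolding commutes_on_pull_front[OF assms] by (metis comp_apply)
qed

lemma commutes_on_remdups: "set xs \<subseteq> \<rho> \<Longrightarrow> op_prod xs \<phi> = op_prod (remdups xs) \<phi>"
proof (induction xs)
  case (Cons f xs)
  show ?case
  proof (cases "f \<in> set xs")
    case True
    then have "f (op_prod xs \<phi>) = op_prod xs \<phi>"
      using Cons.prems by (intro commutes_on_fixed) auto
    then show ?thesis using Cons True by simp
  qed (use Cons in simp)
qed simp

lemma commutes_on_set_eq:
  assumes "set xs \<subseteq> \<rho>" "set ys = set xs"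
  shows "op_prod xs \<phi> = op_prod ys \<phi>"
proof -
  have "mset (remdups xs) = mset (remdups ys)"
    using assms(2) by (simp add: set_eq_iff_mset_eq_distinct[symmetric])
  then have "op_prod (remdups xs) \<phi> = op_prod (remdups ys) \<phi>"
    using assms(1) by (intro commutes_on_permute) auto
  then show ?thesis
    using assms commutes_on_remdups[of xs] commutes_on_remdups[of ys] by simp
qed

end

end

lemma cinner_op_prod_fixed:
  fixes xs :: "('h::complex_inner \<Rightarrow> 'h) list"
  assumes "\<forall>f\<in>set xs. is_projection f \<and> f y = y"
  shows "cinner y (op_prod xs \<phi>) = cinner y \<phi>"
  using assms by (induction xs) (auto simp flip: projection_adjoint)

lemma proj_meet_apply:
  fixes ps :: "('h::chilbert_space \<Rightarrow> 'h) list"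
  assumes comm: "commutes_on \<rho> \<phi>" and ps: "set ps \<subseteq> \<rho>"
    and proj: "\<And>f. f \<in> \<rho> \<Longrightarrow> is_projection f"
  shows "proj_meet ps \<phi> = op_prod ps \<phi>"
proof -
  have ps_proj: "\<forall>f\<in>set ps. is_projection f" using ps proj by auto
  have idem: "f \<circ> f = f" if "f \<in> \<rho>" for f
    using proj[OF that] by (simp add: is_projection_def)
  show ?thesis
  proof (rule projection_apply_eqI[OF proj_meet(1)[OF ps_proj]])
    show "op_prod ps \<phi> \<in> range (proj_meet ps)"
      unfolding proj_meet(2)[OF ps_proj]
      using commutes_on_fixed[OF comm idem ps] by (metis INT_I rangeI)
    show "cinner y (op_prod ps \<phi>) = cinner y \<phi>" if "y \<in> range (proj_meet ps)" for y
      using that ps_proj unfolding proj_meet(2)[OF ps_proj]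
      by (intro cinner_op_prod_fixed) (auto simp: range_projection)
  qed
qed

lemma op_prod_scaleC:
  "\<forall>f\<in>set xs. is_projection f \<Longrightarrow> op_prod xs (scaleC c \<phi>) = scaleC c (op_prod xs \<phi>)"
  by (induction xs) (auto simp: projection_scaleC)

lemma commutes_on_scaleC:
  assumes "commutes_on \<rho> \<phi>" "\<And>f. f \<in> \<rho> \<Longrightarrow> is_projection f"
  shows "commutes_on \<rho> (scaleC c \<phi>)"
  unfolding commutes_on_def
proof (intro allI impI)
  fix xs ys assume xs_ys: "set xs \<subseteq> \<rho> \<and> set ys \<subseteq> \<rho> \<and> mset xs = mset ys"
  then have "op_prod xs \<phi> = op_prod ys \<phi>" using assms(1) unfolding commutes_on_def by blast
  moreover have "\<forall>f\<in>set xs. is_projection f" "\<forall>f\<in>set ys. is_projection f"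
    using xs_ys assms(2) by auto
  ultimately show "op_prod xs (scaleC c \<phi>) = op_prod ys (scaleC c \<phi>)"
    by (simp add: op_prod_scaleC)
qed

lemma commutes_on_op_prod_eq_0:
  assumes comm: "commutes_on \<rho> \<phi>" and xs: "set xs \<subseteq> \<rho>" "f \<in> set xs" "g \<in> set xs"
    and idem: "f \<circ> f = f" and orth: "\<And>x. f (g x) = 0"
  shows "op_prod xs \<phi> = 0"
proof (cases "f = g")
  case True
  then show ?thesis using commutes_on_pull_front[OF comm xs(1,2)] idem orth by (metis comp_apply)
next
  case False
  then have "g \<in> set (remove1 f xs)" using xs(3) by simp
  moreover have "set (remove1 f xs) \<subseteq> \<rho>" using xs(1) set_remove1_subset by fast
  ultimately show ?thesis
    using commutes_on_pull_front[OF comm xs(1,2)] commutes_on_pull_front[OF comm] orth by metis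
qed

section \<open>Resolutions of the identity\<close>

lemma resolution_norm:
  fixes q :: "'a \<Rightarrow> 'h::complex_inner \<Rightarrow> 'h"
  assumes proj: "\<And>a. a \<in> G \<Longrightarrow> is_projection (q a)" and res: "((\<lambda>a. q a x) has_sum x) G"
  shows "((\<lambda>a. (norm (q a x))\<^sup>2) has_sum (norm x)\<^sup>2) G"
proof -
  have "((\<lambda>a. cinner x (q a x)) has_sum cinner x x) G"
    using has_sum_bounded_linear[OF bounded_linear_cinner_right res] .
  then have "((\<lambda>a. Re (cinner x (q a x))) has_sum Re (cinner x x)) G"
    using has_sum_bounded_linear[OF bounded_linear_Re] by blast
  moreover have "Re (cinner x (q a x)) = (norm (q a x))\<^sup>2" if "a \<in> G" for a
    using projection_cinner_self[OF proj[OF that]] by simp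
  ultimately have "((\<lambda>a. (norm (q a x))\<^sup>2) has_sum Re (cinner x x)) G"
    by (simp cong: has_sum_cong)
  then show ?thesis by (simp only: power2_norm_eq_cinner)
qed

lemma resolution_orthogonal:
  fixes q :: "'a \<Rightarrow> 'h::complex_inner \<Rightarrow> 'h"
  assumes proj: "\<And>a. a \<in> G \<Longrightarrow> is_projection (q a)"
    and res: "\<And>x. ((\<lambda>a. q a x) has_sum x) G"
    and ab: "a \<in> G" "b \<in> G" "a \<noteq> b"
  shows "q a (q b x) = 0"
proof -
  let ?y = "q b x"
  have "(\<Sum>c\<in>{a,b}. (norm (q c ?y))\<^sup>2) \<le> (norm ?y)\<^sup>2"
    by (rule has_sum_mono2[OF has_sum_finite resolution_norm[OF proj res]]) (use ab in auto)
  moreover have "q b ?y = ?y" using projection_idem[OF proj[OF ab(2)]] .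
  ultimately have "(norm (q a ?y))\<^sup>2 \<le> 0" using ab by simp
  then show ?thesis by simp
qed

lemma resolution_empty:
  fixes q :: "'a \<Rightarrow> 'h::complex_inner \<Rightarrow> 'h" and x :: 'h
  assumes "\<And>x. ((\<lambda>a. q a x) has_sum x) {}"
  shows "x = 0"
  using has_sum_unique[OF assms[of x] has_sum_empty] by simp

lemma nn_integral_count_space_Collect:
  "(\<integral>\<^sup>+x. f x \<partial>count_space {x\<in>A. P x}) = (\<integral>\<^sup>+x. f x * indicator {x. P x} x \<partial>count_space A)"
  by (simp add: nn_integral_count_space_indicator)
    (auto intro!: nn_integral_cong split: split_indicator)

lemma nn_integral_count_space_fibres:
  assumes Y: "countable Y" and h: "\<And>x. x \<in> A \<Longrightarrow> h x \<in> Y"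
  shows "(\<integral>\<^sup>+x. f x \<partial>count_space A)
    = (\<integral>\<^sup>+y. (\<integral>\<^sup>+x. f x \<partial>count_space {x\<in>A. h x = y}) \<partial>count_space Y)"
proof -
  have "(\<integral>\<^sup>+y. (\<integral>\<^sup>+x. f x \<partial>count_space {x\<in>A. h x = y}) \<partial>count_space Y)
      = (\<integral>\<^sup>+x. (\<integral>\<^sup>+y. f x * indicator {h x} y \<partial>count_space Y) \<partial>count_space A)"
    unfolding nn_integral_count_space_Collect
    by (subst nn_integral_count_space_nn_integral[OF Y])
      (auto intro!: nn_integral_cong split: split_indicator)
  also have "\<dots> = (\<integral>\<^sup>+x. f x \<partial>count_space A)"
    using h by (intro nn_integral_cong) simp
  finally show ?thesis ..
qed

lemma nn_integral_count_space_has_sum: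
  fixes f :: "'a \<Rightarrow> real"
  assumes hs: "(f has_sum s) A" and nonneg: "\<And>x. x \<in> A \<Longrightarrow> f x \<ge> 0"
  shows "(\<integral>\<^sup>+x. ennreal (f x) \<partial>count_space A) = ennreal s"
proof -
  have "(\<lambda>x. norm (f x)) summable_on A"
    using has_sum_imp_summable[OF hs] nonneg by (simp cong: summable_on_cong)
  then have abs: "Infinite_Set_Sum.abs_summable_on f A" using abs_summable_equivalent by blast
  have "(\<integral>\<^sup>+x. ennreal (f x) \<partial>count_space A) = ennreal (infsetsum f A)"
    using nn_integral_conv_infsetsum[OF abs nonneg] by simp
  also have "infsetsum f A = s" using infsetsum_infsum[OF abs] infsumI[OF hs] by simp
  finally show ?thesis .
qed

section \<open>Cylinder sets\<close>

definition coord_events :: "('s \<Rightarrow> 'a set) \<Rightarrow> 's set \<Rightarrow> ('s \<Rightarrow> 'a) set set" where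
  "coord_events \<Gamma> D = {{\<omega> \<in> Omega \<Gamma> D. \<omega> t = a} | t a. t \<in> D \<and> a \<in> \<Gamma> t}"

definition coord_space :: "('s \<Rightarrow> 'a set) \<Rightarrow> 's set \<Rightarrow> ('s \<Rightarrow> 'a) measure" where
  "coord_space \<Gamma> D = measure_of (Omega \<Gamma> D) (coord_events \<Gamma> D) (\<lambda>_. 0)"

definition cyl_index :: "('s \<Rightarrow> 'a set) \<Rightarrow> 's set \<Rightarrow> 's list \<Rightarrow> 'a list \<Rightarrow> bool" where
  "cyl_index \<Gamma> D ts as \<longleftrightarrow>
     length ts = length as \<and> set ts \<subseteq> D \<and> (\<forall>i < length ts. as ! i \<in> \<Gamma> (ts ! i))"

definition cylinders :: "('s \<Rightarrow> 'a set) \<Rightarrow> 's set \<Rightarrow> ('s \<Rightarrow> 'a) set set" where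
  "cylinders \<Gamma> D = {cyl \<Gamma> D ts as | ts as. cyl_index \<Gamma> D ts as}"

lemma coord_events_subset: "coord_events \<Gamma> D \<subseteq> Pow (Omega \<Gamma> D)"
  unfolding coord_events_def by auto

lemma space_coord_space [simp]: "space (coord_space \<Gamma> D) = Omega \<Gamma> D"
  unfolding coord_space_def by (rule space_measure_of[OF coord_events_subset])

lemma sets_coord_space [simp]: "sets (coord_space \<Gamma> D) = Sigma_D \<Gamma> D"
  unfolding coord_space_def Sigma_D_def coord_events_def[symmetric]
  by (rule sets_measure_of[OF coord_events_subset])

lemma coord_events_subset_Sigma_D: "coord_events \<Gamma> D \<subseteq> Sigma_D \<Gamma> D"
  unfolding Sigma_D_def coord_events_def by auto

lemma cyl_eq_map: "length ts = length as \<Longrightarrow> cyl \<Gamma> D ts as = {\<omega> \<in> Omega \<Gamma> D. map \<omega> ts = as}"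
  by (auto simp: cyl_def list_eq_iff_nth_eq)

lemma cyl_Nil: "cyl \<Gamma> D [] [] = Omega \<Gamma> D"
  by (simp add: cyl_eq_map)

lemma cyl_Cons: "cyl \<Gamma> D (t # ts) (a # as) = {\<omega> \<in> Omega \<Gamma> D. \<omega> t = a} \<inter> cyl \<Gamma> D ts as"
  unfolding cyl_def by (auto simp: less_Suc_eq_0_disj)

lemma cyl_append:
  assumes "length ts = length as" "length ts' = length as'"
  shows "cyl \<Gamma> D (ts @ ts') (as @ as') = cyl \<Gamma> D ts as \<inter> cyl \<Gamma> D ts' as'"
  using assms by (auto simp: cyl_eq_map)

lemma cyl_in_Sigma_D: "cyl_index \<Gamma> D ts as \<Longrightarrow> cyl \<Gamma> D ts as \<in> Sigma_D \<Gamma> D"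
proof (induction ts arbitrary: as)
  case Nil
  then show ?case by (simp add: cyl_index_def cyl_Nil Sigma_D_def sigma_sets_top)
next
  case (Cons t ts)
  then obtain a as' where as: "as = a # as'" by (cases as) (auto simp: cyl_index_def)
  have "cyl_index \<Gamma> D ts as'" and t: "t \<in> D" "a \<in> \<Gamma> t"
    using Cons.prems unfolding as cyl_index_def by (simp_all add: All_less_Suc2)
  then have "cyl \<Gamma> D ts as' \<in> sets (coord_space \<Gamma> D)"
    using Cons.IH by simp
  moreover have "{\<omega> \<in> Omega \<Gamma> D. \<omega> t = a} \<in> sets (coord_space \<Gamma> D)"
    using t coord_events_subset_Sigma_D[of \<Gamma> D] unfolding coord_events_def by auto
  ultimately show ?case unfolding as cyl_Cons sets_coord_space[symmetric] by (intro sets.Int)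
qed

lemma sigma_sets_cylinders: "sigma_sets (Omega \<Gamma> D) (cylinders \<Gamma> D) = Sigma_D \<Gamma> D"
proof
  show "sigma_sets (Omega \<Gamma> D) (cylinders \<Gamma> D) \<subseteq> Sigma_D \<Gamma> D"
    unfolding Sigma_D_def
    by (rule sigma_sets_mono) (use cyl_in_Sigma_D in \<open>auto simp: cylinders_def Sigma_D_def\<close>)
  have "{\<omega> \<in> Omega \<Gamma> D. \<omega> t = a} \<in> cylinders \<Gamma> D" if "t \<in> D" "a \<in> \<Gamma> t" for t a
  proof -
    have "{\<omega> \<in> Omega \<Gamma> D. \<omega> t = a} = cyl \<Gamma> D [t] [a]" by (simp add: cyl_eq_map)
    moreover have "cyl_index \<Gamma> D [t] [a]" using that by (simp add: cyl_index_def)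
    ultimately show ?thesis unfolding cylinders_def by blast
  qed
  then have "coord_events \<Gamma> D \<subseteq> cylinders \<Gamma> D"
    unfolding coord_events_def by blast
  then show "Sigma_D \<Gamma> D \<subseteq> sigma_sets (Omega \<Gamma> D) (cylinders \<Gamma> D)"
    unfolding Sigma_D_def coord_events_def[symmetric] by (rule sigma_sets_mono')
qed

lemma Int_stable_cylinders: "Int_stable (cylinders \<Gamma> D)"
proof (rule Int_stableI)
  fix X Y assume "X \<in> cylinders \<Gamma> D" "Y \<in> cylinders \<Gamma> D"
  then obtain ts as ts' as' where X: "X = cyl \<Gamma> D ts as" "cyl_index \<Gamma> D ts as"
    and Y: "Y = cyl \<Gamma> D ts' as'" "cyl_index \<Gamma> D ts' as'" unfolding cylinders_def by blast
  have "X \<inter> Y = cyl \<Gamma> D (ts @ ts') (as @ as')"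
    using X Y by (simp add: cyl_append cyl_index_def)
  moreover have "cyl_index \<Gamma> D (ts @ ts') (as @ as')"
    using X(2) Y(2) unfolding cyl_index_def by (auto simp: nth_append)
  ultimately show "X \<inter> Y \<in> cylinders \<Gamma> D" unfolding cylinders_def by blast
qed

lemma Pphi_eqI:
  assumes M: "prob_space M" "space M = Omega \<Gamma> D" "sets M = Sigma_D \<Gamma> D"
    and cyl: "\<And>ts as. cyl_index \<Gamma> D ts as \<Longrightarrow>
      measure M (cyl \<Gamma> D ts as) = (norm (pjoint p ts as (unitvec \<phi>)))\<^sup>2"
  shows "Pphi p \<Gamma> D \<phi> = M"
  unfolding Pphi_def
proof (rule the_equality)
  show "prob_space M \<and> space M = Omega \<Gamma> D \<and> sets M = Sigma_D \<Gamma> D \<and>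
     (\<forall>ts as. length ts = length as \<and> set ts \<subseteq> D \<and> (\<forall>i < length ts. as ! i \<in> \<Gamma> (ts ! i))
        \<longrightarrow> measure M (cyl \<Gamma> D ts as) = (norm (pjoint p ts as (unitvec \<phi>)))\<^sup>2)"
    using M cyl unfolding cyl_index_def by blast
  fix N assume N: "prob_space N \<and> space N = Omega \<Gamma> D \<and> sets N = Sigma_D \<Gamma> D \<and>
     (\<forall>ts as. length ts = length as \<and> set ts \<subseteq> D \<and> (\<forall>i < length ts. as ! i \<in> \<Gamma> (ts ! i))
        \<longrightarrow> measure N (cyl \<Gamma> D ts as) = (norm (pjoint p ts as (unitvec \<phi>)))\<^sup>2)"
  interpret M: prob_space M by (rule M(1))
  interpret N: prob_space N using N by blast
  have Omega_cyl: "Omega \<Gamma> D \<in> cylinders \<Gamma> D"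
    unfolding cylinders_def using cyl_Nil[of \<Gamma> D] by (force simp: cyl_index_def)
  show "N = M"
  proof (rule measure_eqI_generator_eq[OF Int_stable_cylinders, where A = "\<lambda>_. Omega \<Gamma> D"])
    show "cylinders \<Gamma> D \<subseteq> Pow (Omega \<Gamma> D)" unfolding cylinders_def cyl_def by blast
    show "emeasure N X = emeasure M X" if "X \<in> cylinders \<Gamma> D" for X
      using that N cyl unfolding cylinders_def cyl_index_def
      by (auto simp: M.emeasure_eq_measure N.emeasure_eq_measure)
  qed (use N M Omega_cyl in \<open>simp_all add: sigma_sets_cylinders\<close>)
qed

lemma PiE_map_eq_singleton:
  assumes "\<omega> \<in> PiE (set ts) \<Gamma>" "map \<omega> ts = as"
  shows "{\<omega>' \<in> PiE (set ts) \<Gamma>. map \<omega>' ts = as} = {\<omega>}"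
proof -
  have "\<omega>' = \<omega>" if "\<omega>' \<in> PiE (set ts) \<Gamma>" "map \<omega>' ts = as" for \<omega>'
    using that assms by (intro PiE_ext[of \<omega>' "set ts" \<Gamma> \<omega>]) auto
  then show ?thesis using assms by blast
qed

lemma PiE_map_eq_empty_conflict:
  assumes len: "length as = length ts" and as: "\<forall>i<length ts. as ! i \<in> \<Gamma> (ts ! i)"
    and empty: "{\<omega> \<in> PiE (set ts) \<Gamma>. map \<omega> ts = as} = {}"
  shows "\<exists>i<length ts. \<exists>j<length ts. ts ! i = ts ! j \<and> as ! i \<noteq> as ! j"
proof (rule ccontr)
  assume "\<not> ?thesis"
  then have consistent: "as ! i = as ! j" if "i < length ts" "j < length ts" "ts ! i = ts ! j" for i j
    using that by blast
  define idx where "idx t = (SOME i. i < length ts \<and> ts ! i = t)" for t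
  have idx: "idx t < length ts" "ts ! idx t = t" if "t \<in> set ts" for t
    using someI_ex[of "\<lambda>i. i < length ts \<and> ts ! i = t"] that
    unfolding idx_def in_set_conv_nth by blast+
  define \<omega> where "\<omega> = (\<lambda>t\<in>set ts. as ! idx t)"
  have "as ! idx t \<in> \<Gamma> t" if "t \<in> set ts" for t
    using as idx(1)[OF that] idx(2)[OF that] by force
  then have "\<omega> \<in> PiE (set ts) \<Gamma>" by (auto simp: \<omega>_def)
  moreover have "map \<omega> ts = as"
  proof (rule nth_equalityI)
    fix i assume i: "i < length (map \<omega> ts)"
    then have t: "ts ! i \<in> set ts" by simp
    have "as ! idx (ts ! i) = as ! i"
      using i by (intro consistent idx[OF t]) simp
    then show "map \<omega> ts ! i = as ! i" using i by (simp add: \<omega>_def)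
  qed (simp add: len)
  ultimately show False using empty by blast
qed

lemma bij_betw_fun_upd_PiE:
  assumes s_H: "s \<notin> H" and \<eta>': "\<eta>' \<in> PiE H \<Gamma>"
  shows "bij_betw (\<lambda>a. fun_upd \<eta>' s a) (\<Gamma> s) {\<eta> \<in> PiE (insert s H) \<Gamma>. restrict \<eta> H = \<eta>'}"
proof (rule bij_betwI')
  show "fun_upd \<eta>' s a \<in> {\<eta> \<in> PiE (insert s H) \<Gamma>. restrict \<eta> H = \<eta>'}" if "a \<in> \<Gamma> s" for a
    using \<eta>' that s_H by (auto simp: PiE_iff extensional_def restrict_def fun_eq_iff)
  show "\<exists>a\<in>\<Gamma> s. \<eta> = fun_upd \<eta>' s a" if \<eta>: "\<eta> \<in> {\<eta> \<in> PiE (insert s H) \<Gamma>. restrict \<eta> H = \<eta>'}" for \<eta>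
  proof
    have "\<eta> x = \<eta>' x" if "x \<noteq> s" for x
    proof (cases "x \<in> H")
      case True
      then show ?thesis using \<eta> by (metis (mono_tags, lifting) mem_Collect_eq restrict_apply')
    next
      case False
      then show ?thesis using \<eta> \<eta>' that by (auto simp: PiE_iff extensional_def)
    qed
    then show "\<eta> = fun_upd \<eta>' s (\<eta> s)" by auto
  qed (use \<eta> in auto)
qed (metis fun_upd_same)

lemma restrict_measurable_coord_space:
  assumes "D \<subseteq> S"
  shows "(\<lambda>\<omega>. restrict \<omega> D) \<in> coord_space \<Gamma> S \<rightarrow>\<^sub>M coord_space \<Gamma> D"
  unfolding coord_space_def[of \<Gamma> D]
proof (rule measurable_measure_of[OF coord_events_subset])
  show "(\<lambda>\<omega>. restrict \<omega> D) \<in> space (coord_space \<Gamma> S) \<rightarrow> Omega \<Gamma> D"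
    using assms by (auto simp: Omega_def PiE_iff)
  fix Y assume "Y \<in> coord_events \<Gamma> D"
  then obtain t a where Y: "Y = {\<omega> \<in> Omega \<Gamma> D. \<omega> t = a}" "t \<in> D" "a \<in> \<Gamma> t"
    unfolding coord_events_def by blast
  then have "(\<lambda>\<omega>. restrict \<omega> D) -` Y \<inter> space (coord_space \<Gamma> S) = {\<omega> \<in> Omega \<Gamma> S. \<omega> t = a}"
    using assms by (auto simp: Omega_def PiE_iff extensional_def)
  also have "\<dots> \<in> sets (coord_space \<Gamma> S)"
    using Y assms coord_events_subset_Sigma_D[of \<Gamma> S] unfolding coord_events_def by auto
  finally show "(\<lambda>\<omega>. restrict \<omega> D) -` Y \<inter> space (coord_space \<Gamma> S) \<in> sets (coord_space \<Gamma> S)" .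
qed

lemma vimage_restrict_cyl:
  assumes "cyl_index \<Gamma> D ts as" "D \<subseteq> S"
  shows "(\<lambda>\<omega>. restrict \<omega> D) -` cyl \<Gamma> D ts as \<inter> Omega \<Gamma> S = cyl \<Gamma> S ts as"
  using assms by (auto simp: cyl_def cyl_index_def Omega_def PiE_iff subset_iff extensional_def)

section \<open>Events determined by the coordinates in \<open>D\<close>\<close>

lemma Sigma_D_eq_sigma_sets_coord_subsets:
  assumes "\<And>t. t \<in> D \<Longrightarrow> countable (\<Gamma> t)"
  shows "Sigma_D \<Gamma> D = sigma_sets (Omega \<Gamma> D) {{\<omega> \<in> Omega \<Gamma> D. \<omega> t \<in> B} | t B. t \<in> D \<and> B \<subseteq> \<Gamma> t}"
proof
  show "Sigma_D \<Gamma> D \<subseteq> sigma_sets (Omega \<Gamma> D) {{\<omega> \<in> Omega \<Gamma> D. \<omega> t \<in> B} | t B. t \<in> D \<and> B \<subseteq> \<Gamma> t}"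
    unfolding Sigma_D_def
  proof (rule sigma_sets_mono', safe)
    fix t a assume "t \<in> D" "a \<in> \<Gamma> t"
    then show "\<exists>t' B. {\<omega> \<in> Omega \<Gamma> D. \<omega> t = a} = {\<omega> \<in> Omega \<Gamma> D. \<omega> t' \<in> B} \<and> t' \<in> D \<and> B \<subseteq> \<Gamma> t'"
      by (intro exI[of _ t] exI[of _ "{a}"]) auto
  qed
  show "sigma_sets (Omega \<Gamma> D) {{\<omega> \<in> Omega \<Gamma> D. \<omega> t \<in> B} | t B. t \<in> D \<and> B \<subseteq> \<Gamma> t} \<subseteq> Sigma_D \<Gamma> D"
    unfolding Sigma_D_def
  proof (rule sigma_sets_mono, safe)
    fix t B assume tB: "t \<in> D" "B \<subseteq> \<Gamma> t"
    have "countable B" using tB assms countable_subset by blast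
    have "{\<omega> \<in> Omega \<Gamma> D. \<omega> t \<in> B} = (\<Union>a\<in>B. {\<omega> \<in> Omega \<Gamma> D. \<omega> t = a})" by auto
    also have "\<dots> \<in> sigma_sets (Omega \<Gamma> D) {{\<omega> \<in> Omega \<Gamma> D. \<omega> t = a} |t a. t \<in> D \<and> a \<in> \<Gamma> t}"
      using tB \<open>countable B\<close>
      by (intro sigma_sets_UNION countable_image) auto
    finally show "{\<omega> \<in> Omega \<Gamma> D. \<omega> t \<in> B}
        \<in> sigma_sets (Omega \<Gamma> D) {{\<omega> \<in> Omega \<Gamma> D. \<omega> t = a} |t a. t \<in> D \<and> a \<in> \<Gamma> t}" .
  qed
qed

lemma vimage_restrict_coord_subsets:
  assumes DS: "D \<subseteq> S"
  shows "{(\<lambda>\<omega>. restrict \<omega> D) -` E \<inter> Omega \<Gamma> S | E.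
      E \<in> {{\<omega> \<in> Omega \<Gamma> D. \<omega> t \<in> B} | t B. t \<in> D \<and> B \<subseteq> \<Gamma> t}}
    = {{\<omega> \<in> Omega \<Gamma> S. \<omega> t \<in> B} | t B. t \<in> D \<and> B \<subseteq> \<Gamma> t}"
    (is "{?X -` E \<inter> _ | E. E \<in> {?E (Omega \<Gamma> D) t B | t B. _}} = _")
proof -
  have vimage_E: "?X -` ?E (Omega \<Gamma> D) t B \<inter> Omega \<Gamma> S = ?E (Omega \<Gamma> S) t B" if "t \<in> D" for t B
  proof (intro set_eqI iffI)
    fix \<omega> assume "\<omega> \<in> ?E (Omega \<Gamma> S) t B"
    then show "\<omega> \<in> ?X -` ?E (Omega \<Gamma> D) t B \<inter> Omega \<Gamma> S"
      using that DS by (auto simp: Omega_def restrict_PiE_iff dest: PiE_mem)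
  qed (use that in simp)
  show ?thesis
  proof (intro set_eqI iffI)
    fix Z assume "Z \<in> {?X -` E \<inter> Omega \<Gamma> S | E. E \<in> {?E (Omega \<Gamma> D) t B | t B. t \<in> D \<and> B \<subseteq> \<Gamma> t}}"
    then obtain t B where Z: "Z = ?X -` ?E (Omega \<Gamma> D) t B \<inter> Omega \<Gamma> S" "t \<in> D" "B \<subseteq> \<Gamma> t"
      by blast
    then have "Z = ?E (Omega \<Gamma> S) t B" using vimage_E by simp
    then show "Z \<in> {?E (Omega \<Gamma> S) t B | t B. t \<in> D \<and> B \<subseteq> \<Gamma> t}" using Z(2,3) by blast
  next
    fix Z assume "Z \<in> {?E (Omega \<Gamma> S) t B | t B. t \<in> D \<and> B \<subseteq> \<Gamma> t}"
    then obtain t B where Z: "Z = ?E (Omega \<Gamma> S) t B" "t \<in> D" "B \<subseteq> \<Gamma> t" by blast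
    then have "Z = ?X -` ?E (Omega \<Gamma> D) t B \<inter> Omega \<Gamma> S" using vimage_E by simp
    moreover have "?E (Omega \<Gamma> D) t B \<in> {?E (Omega \<Gamma> D) t B | t B. t \<in> D \<and> B \<subseteq> \<Gamma> t}"
      using Z(2,3) by blast
    ultimately show "Z \<in> {?X -` E \<inter> Omega \<Gamma> S | E. E \<in> {?E (Omega \<Gamma> D) t B | t B. t \<in> D \<and> B \<subseteq> \<Gamma> t}}"
      by blast
  qed
qed

lemma Sigma_sup_eq_vimage:
  assumes countable: "\<And>t. t \<in> D \<Longrightarrow> countable (\<Gamma> t)" and DS: "D \<subseteq> S"
  shows "Sigma_sup \<Gamma> S D = {(\<lambda>\<omega>. restrict \<omega> D) -` B \<inter> Omega \<Gamma> S | B. B \<in> Sigma_D \<Gamma> D}"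
proof -
  have X: "(\<lambda>\<omega>. restrict \<omega> D) \<in> Omega \<Gamma> S \<rightarrow> Omega \<Gamma> D" using DS by (auto simp: Omega_def PiE_iff)
  have "Sigma_sup \<Gamma> S D = sigma_sets (Omega \<Gamma> S) {(\<lambda>\<omega>. restrict \<omega> D) -` E \<inter> Omega \<Gamma> S | E.
      E \<in> {{\<omega> \<in> Omega \<Gamma> D. \<omega> t \<in> B} | t B. t \<in> D \<and> B \<subseteq> \<Gamma> t}}"
    by (simp only: Sigma_sup_def vimage_restrict_coord_subsets[OF DS])
  also have "\<dots> = {(\<lambda>\<omega>. restrict \<omega> D) -` E \<inter> Omega \<Gamma> S | E.
      E \<in> sigma_sets (Omega \<Gamma> D) {{\<omega> \<in> Omega \<Gamma> D. \<omega> t \<in> B} | t B. t \<in> D \<and> B \<subseteq> \<Gamma> t}}"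
    by (rule sigma_sets_vimage_commute[OF X, symmetric])
  finally show ?thesis by (simp only: Sigma_D_eq_sigma_sets_coord_subsets[OF countable])
qed

lemma restr_event_vimage:
  assumes nonempty: "\<And>t. t \<in> S \<Longrightarrow> \<Gamma> t \<noteq> {}" and DS: "D \<subseteq> S" and B: "B \<subseteq> Omega \<Gamma> D"
  shows "restr_event \<Gamma> D ((\<lambda>\<omega>. restrict \<omega> D) -` B \<inter> Omega \<Gamma> S) = B"
proof (intro set_eqI iffI)
  fix \<omega> assume "\<omega> \<in> restr_event \<Gamma> D ((\<lambda>\<omega>. restrict \<omega> D) -` B \<inter> Omega \<Gamma> S)"
  then obtain \<omega>' where \<omega>: "\<omega> \<in> Omega \<Gamma> D" "restrict \<omega>' D \<in> B" "\<forall>t\<in>D. \<omega> t = \<omega>' t"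
    unfolding restr_event_def by blast
  then have "restrict \<omega>' D = \<omega>"
    by (auto simp: Omega_def PiE_iff extensional_def fun_eq_iff)
  then show "\<omega> \<in> B" using \<omega>(2) by simp
next
  fix \<omega> assume \<omega>: "\<omega> \<in> B"
  define \<omega>' where "\<omega>' = (\<lambda>t\<in>S. if t \<in> D then \<omega> t else (SOME a. a \<in> \<Gamma> t))"
  have \<omega>_Omega: "\<omega> \<in> Omega \<Gamma> D" using \<omega> B by blast
  have "\<omega>' \<in> Omega \<Gamma> S"
    using \<omega>_Omega DS nonempty by (auto simp: \<omega>'_def Omega_def PiE_iff some_in_eq)
  moreover have "restrict \<omega>' D = \<omega>"
    using \<omega>_Omega DS by (auto simp: \<omega>'_def Omega_def PiE_iff extensional_def fun_eq_iff)
  moreover have "\<forall>t\<in>D. \<omega> t = \<omega>' t" using DS by (auto simp: \<omega>'_def)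
  ultimately show "\<omega> \<in> restr_event \<Gamma> D ((\<lambda>\<omega>. restrict \<omega> D) -` B \<inter> Omega \<Gamma> S)"
    using \<omega> \<omega>_Omega unfolding restr_event_def by blast
qed

section \<open>Finite-dimensional distributions of a commuting state\<close>

locale commuting_state =
  fixes S :: "'s set" and \<Gamma> :: "'s \<Rightarrow> 'a set" and p :: "'s \<Rightarrow> 'a \<Rightarrow> 'h::chilbert_space \<Rightarrow> 'h"
    and u :: 'h
  assumes countable: "\<And>t. t \<in> S \<Longrightarrow> countable (\<Gamma> t)"
    and proj: "\<And>t a. t \<in> S \<Longrightarrow> a \<in> \<Gamma> t \<Longrightarrow> is_projection (p t a)"
    and resolution: "\<And>t \<phi>. t \<in> S \<Longrightarrow> ((\<lambda>a. p t a \<phi>) has_sum \<phi>) (\<Gamma> t)"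
    and commutes: "commutes_on (pfam p \<Gamma> S) u"
    and norm_u: "norm u = 1"
begin

lemma Gamma_nonempty: "t \<in> S \<Longrightarrow> \<Gamma> t \<noteq> {}"
  using resolution_empty[of "p t" u] resolution norm_u by force

lemma pfamI: "t \<in> S \<Longrightarrow> a \<in> \<Gamma> t \<Longrightarrow> p t a \<in> pfam p \<Gamma> S"
  unfolding pfam_def by blast

lemma pfam_projection: "f \<in> pfam p \<Gamma> S \<Longrightarrow> is_projection f"
  unfolding pfam_def using proj by blast

lemma pfam_idem: "f \<in> pfam p \<Gamma> S \<Longrightarrow> f \<circ> f = f"
  using pfam_projection by (auto simp: is_projection_def)

lemma countable_PiE_Gamma: "finite J \<Longrightarrow> J \<subseteq> S \<Longrightarrow> countable (PiE J \<Gamma>)"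
  using countable by (intro countable_PiE) auto

definition enum :: "'s set \<Rightarrow> 's list" where
  "enum J = (SOME xs. set xs = J \<and> distinct xs)"

definition path_vec :: "'s set \<Rightarrow> ('s \<Rightarrow> 'a) \<Rightarrow> 'h" where
  "path_vec J \<omega> = op_prod (map (\<lambda>t. p t (\<omega> t)) (enum J)) u"

definition weight :: "'s set \<Rightarrow> ('s \<Rightarrow> 'a) \<Rightarrow> ennreal" where
  "weight J \<omega> = ennreal ((norm (path_vec J \<omega>))\<^sup>2)"

lemma set_enum: "finite J \<Longrightarrow> set (enum J) = J"
  unfolding enum_def by (rule someI2_ex[OF finite_distinct_list]) auto

lemma path_vec_eq_op_prod:
  assumes "finite J" "J \<subseteq> S" "\<And>t. t \<in> J \<Longrightarrow> \<omega> t \<in> \<Gamma> t" "set ts = J"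
  shows "op_prod (map (\<lambda>t. p t (\<omega> t)) ts) u = path_vec J \<omega>"
  unfolding path_vec_def
  by (rule commutes_on_set_eq[OF commutes pfam_idem]) (use assms set_enum in \<open>auto intro: pfamI\<close>)

lemma path_vec_empty: "path_vec {} \<omega> = u"
  using path_vec_eq_op_prod[of "{}" \<omega> "[]"] by simp

lemma path_vec_insert:
  assumes "finite J" "insert s J \<subseteq> S" "\<And>t. t \<in> insert s J \<Longrightarrow> \<omega> t \<in> \<Gamma> t"
  shows "path_vec (insert s J) \<omega> = p s (\<omega> s) (path_vec J \<omega>)"
  using path_vec_eq_op_prod[of "insert s J" \<omega> "s # enum J"] assms set_enum[OF assms(1)]
  by (simp add: path_vec_def)

lemma path_vec_cong: "(\<And>t. t \<in> J \<Longrightarrow> \<omega> t = \<omega>' t) \<Longrightarrow> finite J \<Longrightarrow> path_vec J \<omega> = path_vec J \<omega>'"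
  unfolding path_vec_def by (metis (mono_tags, lifting) map_eq_conv set_enum)

lemma weight_insert_sum:
  assumes J: "finite J" "J \<subseteq> S" and s: "s \<in> S" "s \<notin> J" and \<omega>: "\<omega> \<in> PiE J \<Gamma>"
  shows "(\<integral>\<^sup>+a. weight (insert s J) (fun_upd \<omega> s a) \<partial>count_space (\<Gamma> s)) = weight J \<omega>"
proof -
  have "path_vec (insert s J) (fun_upd \<omega> s a) = p s a (path_vec J \<omega>)" if "a \<in> \<Gamma> s" for a
  proof -
    have "path_vec (insert s J) (fun_upd \<omega> s a) = p s a (path_vec J (fun_upd \<omega> s a))"
      using J s \<omega> that by (subst path_vec_insert) (auto simp: PiE_iff)
    also have "path_vec J (fun_upd \<omega> s a) = path_vec J \<omega>"
      using s J by (intro path_vec_cong) auto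
    finally show ?thesis .
  qed
  then have "(\<integral>\<^sup>+a. weight (insert s J) (fun_upd \<omega> s a) \<partial>count_space (\<Gamma> s))
      = (\<integral>\<^sup>+a. ennreal ((norm (p s a (path_vec J \<omega>)))\<^sup>2) \<partial>count_space (\<Gamma> s))"
    by (intro nn_integral_cong) (simp add: weight_def)
  also have "\<dots> = weight J \<omega>"
    unfolding weight_def
    by (rule nn_integral_count_space_has_sum[OF resolution_norm]) (use proj resolution s in auto)
  finally show ?thesis .
qed

lemma weight_marginal_insert:
  assumes H: "finite H" "insert s H \<subseteq> S" "s \<notin> H" and \<eta>': "\<eta>' \<in> PiE H \<Gamma>"
  shows "(\<integral>\<^sup>+\<eta>. weight (insert s H) \<eta> \<partial>count_space {\<eta> \<in> PiE (insert s H) \<Gamma>. restrict \<eta> H = \<eta>'})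
    = weight H \<eta>'"
proof -
  have "(\<integral>\<^sup>+\<eta>. weight (insert s H) \<eta> \<partial>count_space {\<eta> \<in> PiE (insert s H) \<Gamma>. restrict \<eta> H = \<eta>'})
      = (\<integral>\<^sup>+a. weight (insert s H) (fun_upd \<eta>' s a) \<partial>count_space (\<Gamma> s))"
    using bij_betw_fun_upd_PiE[OF H(3) \<eta>'] by (rule nn_integral_bij_count_space[symmetric])
  also have "\<dots> = weight H \<eta>'" using H \<eta>' by (intro weight_insert_sum) auto
  finally show ?thesis .
qed

lemma weight_marginal_Un:
  assumes "finite K" "K \<inter> J = {}" "finite J" "J \<union> K \<subseteq> S" "\<omega> \<in> PiE J \<Gamma>"
  shows "(\<integral>\<^sup>+\<eta>. weight (J \<union> K) \<eta> \<partial>count_space {\<eta> \<in> PiE (J \<union> K) \<Gamma>. restrict \<eta> J = \<omega>})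
    = weight J \<omega>"
  using assms
proof (induction K rule: finite_induct)
  case empty
  have singleton: "{\<eta> \<in> PiE J \<Gamma>. restrict \<eta> J = \<omega>} = {\<omega>}"
    using empty.prems(4) by (auto simp: PiE_iff extensional_restrict)
  show ?case unfolding Un_empty_right singleton by (simp add: nn_integral_count_space_finite)
next
  case (insert s K)
  let ?H = "J \<union> K"
  let ?Y = "{\<eta>' \<in> PiE ?H \<Gamma>. restrict \<eta>' J = \<omega>}"
  have H: "finite ?H" "insert s ?H \<subseteq> S" "s \<notin> ?H" using insert by auto
  have "countable ?Y"
    using countable_PiE_Gamma[of ?H] H by (auto intro: countable_subset[rotated])
  moreover have "restrict \<eta> ?H \<in> ?Y" if "\<eta> \<in> PiE (J \<union> insert s K) \<Gamma>" "restrict \<eta> J = \<omega>" for \<eta>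
  proof -
    have "restrict \<eta> ?H \<in> PiE ?H \<Gamma>" using that(1) by (simp add: restrict_PiE_iff PiE_iff)
    moreover have "restrict (restrict \<eta> ?H) J = restrict \<eta> J" by (auto simp: restrict_def)
    ultimately show ?thesis using that(2) by simp
  qed
  ultimately have "(\<integral>\<^sup>+\<eta>. weight (J \<union> insert s K) \<eta>
        \<partial>count_space {\<eta> \<in> PiE (J \<union> insert s K) \<Gamma>. restrict \<eta> J = \<omega>})
      = (\<integral>\<^sup>+\<eta>'. (\<integral>\<^sup>+\<eta>. weight (insert s ?H) \<eta>
        \<partial>count_space {\<eta> \<in> PiE (insert s ?H) \<Gamma>. restrict \<eta> ?H = \<eta>'}) \<partial>count_space ?Y)"
    by (subst nn_integral_count_space_fibres[where Y = ?Y and h = "\<lambda>\<eta>. restrict \<eta> ?H"])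
      (auto intro!: nn_integral_cong arg_cong[where f = "\<lambda>A. nn_integral (count_space A) _"]
        simp: fun_eq_iff restrict_def)
  also have "\<dots> = (\<integral>\<^sup>+\<eta>'. weight ?H \<eta>' \<partial>count_space ?Y)"
    using H by (intro nn_integral_cong weight_marginal_insert) auto
  also have "\<dots> = weight J \<omega>" by (rule insert.IH) (use insert.prems in auto)
  finally show ?case .
qed

lemma weight_marginal:
  assumes "finite H" "J \<subseteq> H" "H \<subseteq> S" "\<omega> \<in> PiE J \<Gamma>"
  shows "(\<integral>\<^sup>+\<eta>. weight H \<eta> \<partial>count_space {\<eta> \<in> PiE H \<Gamma>. restrict \<eta> J = \<omega>}) = weight J \<omega>"
proof -
  have "H = J \<union> (H - J)" using assms by auto
  then show ?thesis
    using weight_marginal_Un[of "H - J" J \<omega>] assms finite_subset[OF assms(2,1)] by auto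
qed

lemma weight_total:
  assumes "finite J" "J \<subseteq> S"
  shows "(\<integral>\<^sup>+\<eta>. weight J \<eta> \<partial>count_space (PiE J \<Gamma>)) = 1"
proof -
  have "{\<eta> \<in> PiE J \<Gamma>. restrict \<eta> {} = (\<lambda>_. undefined)} = PiE J \<Gamma>" by auto
  then show ?thesis
    using weight_marginal[OF assms(1) empty_subsetI assms(2), of "\<lambda>_. undefined"]
    by (simp add: weight_def path_vec_empty norm_u)
qed

end

lemma sets_PiM_nat_discrete:
  assumes "finite J"
  shows "sets (PiM J (\<lambda>_. borel :: nat discrete measure)) = Pow (PiE J (\<lambda>_. UNIV))"
proof -
  have "sets (PiM J (\<lambda>_. borel :: nat discrete measure))
      = sets (PiM J (\<lambda>_. count_space (UNIV :: nat discrete set)))"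
    by (rule sets_PiM_cong) (simp_all add: sets_borel_eq_count_space)
  also have "PiM J (\<lambda>_. count_space (UNIV :: nat discrete set)) = count_space (PiE J (\<lambda>_. UNIV))"
    using assms by (intro count_space_PiM_finite) simp_all
  finally show ?thesis by simp
qed

section \<open>The path measure\<close>

context commuting_state
begin

definition fdd :: "'s set \<Rightarrow> ('s \<Rightarrow> 'a) measure" where
  "fdd J = density (count_space (PiE J \<Gamma>)) (weight J)"

lemma sets_fdd [simp]: "sets (fdd J) = Pow (PiE J \<Gamma>)"
  by (simp add: fdd_def)

lemma space_fdd [simp]: "space (fdd J) = PiE J \<Gamma>"
  by (simp add: fdd_def)

lemma emeasure_fdd:
  assumes "B \<subseteq> PiE J \<Gamma>"
  shows "emeasure (fdd J) B = (\<integral>\<^sup>+\<eta>. weight J \<eta> \<partial>count_space B)"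
proof -
  have "emeasure (fdd J) B = (\<integral>\<^sup>+\<eta>. weight J \<eta> * indicator B \<eta> \<partial>count_space (PiE J \<Gamma>))"
    unfolding fdd_def using assms by (subst emeasure_density) auto
  also have "\<dots> = (\<integral>\<^sup>+\<eta>. weight J \<eta> \<partial>count_space {\<eta> \<in> PiE J \<Gamma>. \<eta> \<in> B})"
    by (simp only: nn_integral_count_space_Collect) (simp add: indicator_def)
  finally show ?thesis using assms by (simp add: Int_absorb1 Collect_conj_eq)
qed

lemma emeasure_fdd_singleton: "\<omega> \<in> PiE J \<Gamma> \<Longrightarrow> emeasure (fdd J) {\<omega>} = weight J \<omega>"
  by (simp add: emeasure_fdd nn_integral_count_space_finite)

lemma prob_space_fdd: "finite J \<Longrightarrow> J \<subseteq> S \<Longrightarrow> prob_space (fdd J)"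
  by (rule prob_spaceI) (simp add: emeasure_fdd weight_total)

lemma restrict_measurable_fdd:
  "J \<subseteq> H \<Longrightarrow> (\<lambda>\<omega>. restrict \<omega> J) \<in> fdd H \<rightarrow>\<^sub>M count_space (PiE J \<Gamma>)"
  by (auto simp: fdd_def PiE_iff)

lemma distr_restrict_fdd:
  assumes "J \<subseteq> H" "finite H" "H \<subseteq> S"
  shows "distr (fdd H) (count_space (PiE J \<Gamma>)) (\<lambda>\<omega>. restrict \<omega> J) = fdd J"
proof (rule measure_eqI_countable[where A = "PiE J \<Gamma>"])
  have "finite J" using assms(1,2) by (rule finite_subset)
  then show "countable (PiE J \<Gamma>)" using assms(1,3) by (intro countable_PiE_Gamma) auto
  note restrict_meas = restrict_measurable_fdd[OF assms(1)]
  fix \<omega> assume \<omega>: "\<omega> \<in> PiE J \<Gamma>"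
  have "emeasure (distr (fdd H) (count_space (PiE J \<Gamma>)) (\<lambda>\<omega>. restrict \<omega> J)) {\<omega>}
      = emeasure (fdd H) ((\<lambda>\<omega>. restrict \<omega> J) -` {\<omega>} \<inter> space (fdd H))"
    using \<omega> by (intro emeasure_distr[OF restrict_meas]) simp
  also have "(\<lambda>\<omega>. restrict \<omega> J) -` {\<omega>} \<inter> space (fdd H) = {\<eta> \<in> PiE H \<Gamma>. restrict \<eta> J = \<omega>}"
    by auto
  also have "emeasure (fdd H) \<dots> = weight J \<omega>"
    by (simp add: emeasure_fdd weight_marginal[OF assms(2,1,3) \<omega>])
  also have "\<dots> = emeasure (fdd J) {\<omega>}" using \<omega> by (simp add: emeasure_fdd_singleton)
  finally show "emeasure (distr (fdd H) (count_space (PiE J \<Gamma>)) (\<lambda>\<omega>. restrict \<omega> J)) {\<omega>}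
      = emeasure (fdd J) {\<omega>}" .
qed simp_all

text \<open>Kolmogorov's extension theorem in the library is stated for Polish spaces, so the
 countable sets \<open>\<Gamma> t\<close> are transported into \<^typ>\<open>nat discrete\<close> and back.\<close>

definition encode :: "'s set \<Rightarrow> ('s \<Rightarrow> 'a) \<Rightarrow> 's \<Rightarrow> nat discrete" where
  "encode J \<omega> = (\<lambda>t\<in>J. discrete (to_nat_on (\<Gamma> t) (\<omega> t)))"

definition decode :: "('s \<Rightarrow> nat discrete) \<Rightarrow> 's \<Rightarrow> 'a" where
  "decode x = (\<lambda>t\<in>S. from_nat_into (\<Gamma> t) (of_discrete (x t)))"

definition fdd_nat :: "'s set \<Rightarrow> ('s \<Rightarrow> nat discrete) measure" where
  "fdd_nat J = distr (fdd J) (PiM J (\<lambda>_. borel)) (encode J)"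

lemma encode_measurable: "encode J \<in> fdd J \<rightarrow>\<^sub>M PiM J (\<lambda>_. borel)"
  by (simp add: fdd_def encode_def space_PiM)

lemma decode_encode:
  assumes "\<omega> \<in> PiE J \<Gamma>" "J \<subseteq> S" "t \<in> J"
  shows "from_nat_into (\<Gamma> t) (of_discrete (encode J \<omega> t)) = \<omega> t"
  using assms countable by (auto simp: encode_def PiE_iff discrete.discrete_inverse)

lemma distr_restrict_fdd_nat:
  assumes "J \<subseteq> H" "finite H" "H \<subseteq> S"
  shows "fdd_nat J = distr (fdd_nat H) (PiM J (\<lambda>_. borel)) (\<lambda>f. restrict f J)"
proof -
  have encode_meas: "encode J \<in> count_space (PiE J \<Gamma>) \<rightarrow>\<^sub>M PiM J (\<lambda>_. borel)"
    by (simp add: encode_def space_PiM)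
  have "distr (fdd_nat H) (PiM J (\<lambda>_. borel)) (\<lambda>f. restrict f J)
      = distr (fdd H) (PiM J (\<lambda>_. borel)) ((\<lambda>f. restrict f J) \<circ> encode H)"
    unfolding fdd_nat_def
    by (rule distr_distr[OF measurable_restrict_subset[OF assms(1)] encode_measurable])
  also have "\<dots> = distr (fdd H) (PiM J (\<lambda>_. borel)) (encode J \<circ> (\<lambda>\<omega>. restrict \<omega> J))"
    using assms(1) by (intro distr_cong) (auto simp: encode_def restrict_def fun_eq_iff)
  also have "\<dots> = fdd_nat J"
    unfolding fdd_nat_def distr_restrict_fdd[OF assms, symmetric]
    by (rule distr_distr[OF encode_meas restrict_measurable_fdd[OF assms(1)], symmetric])
  finally show ?thesis ..
qed

lemma polish_projective_fdd_nat: "polish_projective S fdd_nat"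
  unfolding polish_projective_def
proof (rule projective_family.intro)
  fix J assume "finite J" "J \<subseteq> S"
  then show "prob_space (fdd_nat J)"
    unfolding fdd_nat_def by (rule prob_space.prob_space_distr[OF prob_space_fdd encode_measurable])
qed (rule distr_restrict_fdd_nat)

sublocale kolmogorov: polish_projective S fdd_nat
  by (rule polish_projective_fdd_nat)

definition path_measure :: "('s \<Rightarrow> 'a) measure" where
  "path_measure = distr kolmogorov.lim (coord_space \<Gamma> S) decode"

lemma decode_in_Omega: "decode x \<in> Omega \<Gamma> S"
  unfolding decode_def Omega_def using Gamma_nonempty by (auto intro: from_nat_into)

lemma decode_measurable: "decode \<in> kolmogorov.lim \<rightarrow>\<^sub>M coord_space \<Gamma> S"
  unfolding coord_space_def
proof (rule measurable_measure_of[OF coord_events_subset])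
  show "decode \<in> space kolmogorov.lim \<rightarrow> Omega \<Gamma> S" using decode_in_Omega by blast
  fix Y assume "Y \<in> coord_events \<Gamma> S"
  then obtain t a where Y: "Y = {\<omega> \<in> Omega \<Gamma> S. \<omega> t = a}" "t \<in> S"
    unfolding coord_events_def by blast
  have "(\<lambda>x. x t) -` {n. from_nat_into (\<Gamma> t) (of_discrete n) = a} \<inter> space (PiM S (\<lambda>_. borel))
      \<in> sets (PiM S (\<lambda>_. borel :: nat discrete measure))"
    by (rule measurable_sets[OF measurable_component_singleton[OF Y(2)]])
      (simp add: sets_borel_eq_count_space)
  then show "decode -` Y \<inter> space kolmogorov.lim \<in> sets kolmogorov.lim"
    using Y decode_in_Omega by (simp add: decode_def vimage_def Int_def conj_commute)
qed

lemma prob_space_path_measure: "prob_space path_measure"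
  unfolding path_measure_def
  by (rule prob_space.prob_space_distr[OF kolmogorov.P.prob_space_axioms decode_measurable])

lemma space_path_measure [simp]: "space path_measure = Omega \<Gamma> S"
  by (simp add: path_measure_def)

lemma sets_path_measure [simp]: "sets path_measure = Sigma_D \<Gamma> S"
  by (simp add: path_measure_def)

lemma set_pjoint_factors_subset:
  assumes "cyl_index \<Gamma> S ts as"
  shows "set (map (\<lambda>(t, a). p t a) (zip ts as)) \<subseteq> pfam p \<Gamma> S"
proof -
  have "ts ! i \<in> S" if "i < length ts" for i using assms that by (auto simp: cyl_index_def)
  then show ?thesis using assms by (auto simp: cyl_index_def in_set_zip intro!: pfamI)
qed

lemma pjoint_eq_op_prod:
  "cyl_index \<Gamma> S ts as \<Longrightarrow> pjoint p ts as u = op_prod (map (\<lambda>(t, a). p t a) (zip ts as)) u"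
  unfolding pjoint_def
  by (rule proj_meet_apply[OF commutes set_pjoint_factors_subset pfam_projection])

lemma measure_path_measure_cyl_eq_fdd:
  assumes cyl: "cyl_index \<Gamma> S ts as"
  shows "measure path_measure (cyl \<Gamma> S ts as)
    = measure (fdd (set ts)) {\<omega> \<in> PiE (set ts) \<Gamma>. map \<omega> ts = as}"
proof -
  let ?J = "set ts"
  have J: "?J \<subseteq> S" "finite ?J" using cyl by (auto simp: cyl_index_def)
  define X where "X = {y \<in> PiE ?J (\<lambda>_. UNIV). map (\<lambda>t. from_nat_into (\<Gamma> t) (of_discrete (y t))) ts = as}"
  have X: "X \<in> sets (PiM ?J (\<lambda>_. borel))" by (auto simp: X_def sets_PiM_nat_discrete)
  have "measure path_measure (cyl \<Gamma> S ts as)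
      = measure kolmogorov.lim (decode -` cyl \<Gamma> S ts as \<inter> space kolmogorov.lim)"
    unfolding path_measure_def
    by (rule measure_distr[OF decode_measurable]) (simp add: cyl_in_Sigma_D[OF cyl])
  also have "decode -` cyl \<Gamma> S ts as \<inter> space kolmogorov.lim = prod_emb S (\<lambda>_. borel) ?J X"
    using decode_in_Omega J cyl
    by (auto simp: cyl_eq_map cyl_index_def prod_emb_def X_def decode_def space_PiM PiE_iff)
  also have "measure kolmogorov.lim \<dots> = measure (fdd_nat ?J) X"
    by (rule kolmogorov.measure_lim_emb[OF J X])
  also have "\<dots> = measure (fdd ?J) (encode ?J -` X \<inter> space (fdd ?J))"
    unfolding fdd_nat_def by (rule measure_distr[OF encode_measurable X])
  also have "encode ?J -` X \<inter> space (fdd ?J) = {\<omega> \<in> PiE ?J \<Gamma>. map \<omega> ts = as}"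
    using decode_encode[OF _ J(1)] by (auto simp: X_def encode_def cong: map_cong)
  finally show ?thesis .
qed

lemma pjoint_eq_0_if_conflict:
  assumes cyl: "cyl_index \<Gamma> S ts as"
    and ij: "i < length ts" "j < length ts" "ts ! i = ts ! j" "as ! i \<noteq> as ! j"
  shows "pjoint p ts as u = 0"
proof -
  let ?L = "map (\<lambda>(t, a). p t a) (zip ts as)"
  let ?t = "ts ! i"
  have len: "length as = length ts" and t: "?t \<in> S" "as ! i \<in> \<Gamma> ?t" "as ! j \<in> \<Gamma> ?t"
    using cyl ij by (auto simp: cyl_index_def)
  have factor: "p (ts ! k) (as ! k) \<in> set ?L" if "k < length ts" for k
  proof -
    have "?L ! k = p (ts ! k) (as ! k)" "k < length ?L" using that len by simp_all
    then show ?thesis by (metis nth_mem)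
  qed
  have orth: "p ?t (as ! i) (p ?t (as ! j) x) = 0" for x
    using t ij(4) by (intro resolution_orthogonal[of "\<Gamma> ?t"] proj resolution) auto
  note factors = set_pjoint_factors_subset[OF cyl]
  have "p ?t (as ! j) \<in> set ?L" using factor[OF ij(2)] ij(3) by simp
  moreover have "p ?t (as ! i) \<circ> p ?t (as ! i) = p ?t (as ! i)"
    using pfam_idem factors factor[OF ij(1)] by blast
  ultimately have "op_prod ?L u = 0"
    using orth by (intro commutes_on_op_prod_eq_0[OF commutes factors factor[OF ij(1)]])
  then show ?thesis using pjoint_eq_op_prod[OF cyl] by simp
qed

lemma measure_path_measure_cyl:
  assumes cyl: "cyl_index \<Gamma> S ts as"
  shows "measure path_measure (cyl \<Gamma> S ts as) = (norm (pjoint p ts as u))\<^sup>2"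
proof (cases "{\<omega> \<in> PiE (set ts) \<Gamma>. map \<omega> ts = as} = {}")
  case True
  then obtain i j where "i < length ts" "j < length ts" "ts ! i = ts ! j" "as ! i \<noteq> as ! j"
    using PiE_map_eq_empty_conflict[of as ts \<Gamma>] cyl unfolding cyl_index_def by metis
  then have "pjoint p ts as u = 0" by (rule pjoint_eq_0_if_conflict[OF cyl])
  moreover have "measure path_measure (cyl \<Gamma> S ts as) = 0"
    using measure_path_measure_cyl_eq_fdd[OF cyl] unfolding True by simp
  ultimately show ?thesis by simp
next
  case False
  then obtain \<omega> where \<omega>: "\<omega> \<in> PiE (set ts) \<Gamma>" "map \<omega> ts = as" by blast
  have "measure path_measure (cyl \<Gamma> S ts as) = enn2real (weight (set ts) \<omega>)"
    using measure_path_measure_cyl_eq_fdd[OF cyl] PiE_map_eq_singleton[OF \<omega>] \<omega>(1)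
    by (simp add: measure_def emeasure_fdd_singleton)
  also have "\<dots> = (norm (op_prod (map (\<lambda>t. p t (\<omega> t)) ts) u))\<^sup>2"
    using path_vec_eq_op_prod[of "set ts" \<omega> ts] \<omega>(1) cyl
    by (simp add: weight_def cyl_index_def PiE_iff)
  also have "map (\<lambda>t. p t (\<omega> t)) ts = map (\<lambda>(t, a). p t a) (zip ts as)"
    unfolding \<omega>(2)[symmetric] by (induction ts) auto
  finally show ?thesis by (simp add: pjoint_eq_op_prod[OF cyl])
qed

lemma restrict_measurable_path_measure:
  "D \<subseteq> S \<Longrightarrow> (\<lambda>\<omega>. restrict \<omega> D) \<in> path_measure \<rightarrow>\<^sub>M coord_space \<Gamma> D"
  using restrict_measurable_coord_space[of D S \<Gamma>]
  by (simp add: measurable_cong_sets[OF sets_path_measure[folded sets_coord_space] refl])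

lemma Pphi_eq_distr_path_measure:
  assumes u: "unitvec \<phi> = u" and DS: "D \<subseteq> S"
  shows "Pphi p \<Gamma> D \<phi> = distr path_measure (coord_space \<Gamma> D) (\<lambda>\<omega>. restrict \<omega> D)"
proof (rule Pphi_eqI)
  note restrict_meas = restrict_measurable_path_measure[OF DS]
  show "prob_space (distr path_measure (coord_space \<Gamma> D) (\<lambda>\<omega>. restrict \<omega> D))"
    by (rule prob_space.prob_space_distr[OF prob_space_path_measure restrict_meas])
  fix ts as assume cyl: "cyl_index \<Gamma> D ts as"
  have "measure (distr path_measure (coord_space \<Gamma> D) (\<lambda>\<omega>. restrict \<omega> D)) (cyl \<Gamma> D ts as)
      = measure path_measure (cyl \<Gamma> S ts as)"
    using cyl_in_Sigma_D[OF cyl] vimage_restrict_cyl[OF cyl DS]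
    by (simp add: measure_distr[OF restrict_meas])
  also have "\<dots> = (norm (pjoint p ts as (unitvec \<phi>)))\<^sup>2"
    unfolding u using cyl DS by (intro measure_path_measure_cyl) (auto simp: cyl_index_def)
  finally show "measure (distr path_measure (coord_space \<Gamma> D) (\<lambda>\<omega>. restrict \<omega> D)) (cyl \<Gamma> D ts as)
      = (norm (pjoint p ts as (unitvec \<phi>)))\<^sup>2" .
qed simp_all

lemma measure_Pphi_vimage_restrict:
  assumes u: "unitvec \<phi> = u" and DS: "D \<subseteq> S" and B: "B \<in> Sigma_D \<Gamma> D"
  shows "measure (Pphi p \<Gamma> D \<phi>) B = measure path_measure ((\<lambda>\<omega>. restrict \<omega> D) -` B \<inter> Omega \<Gamma> S)"
  using B by (simp add: Pphi_eq_distr_path_measure[OF u DS]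
      measure_distr[OF restrict_measurable_path_measure[OF DS]])

lemma measure_Pphi_restr_event:
  assumes u: "unitvec \<phi> = u" and DS: "D \<subseteq> S" and A: "A \<in> Sigma_sup \<Gamma> S D"
  shows "measure (Pphi p \<Gamma> S \<phi>) A = measure (Pphi p \<Gamma> D \<phi>) (restr_event \<Gamma> D A)"
proof -
  have "\<And>t. t \<in> D \<Longrightarrow> countable (\<Gamma> t)" using countable DS by blast
  then have "A \<in> {(\<lambda>\<omega>. restrict \<omega> D) -` B \<inter> Omega \<Gamma> S | B. B \<in> Sigma_D \<Gamma> D}"
    using A Sigma_sup_eq_vimage[OF _ DS] by blast
  then obtain B where B: "B \<in> Sigma_D \<Gamma> D" and A_eq: "A = (\<lambda>\<omega>. restrict \<omega> D) -` B \<inter> Omega \<Gamma> S"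
    by blast
  have "B \<subseteq> Omega \<Gamma> D" using sets.sets_into_space[of B "coord_space \<Gamma> D"] B by simp
  then have restr_A: "restr_event \<Gamma> D A = B"
    unfolding A_eq using Gamma_nonempty DS by (intro restr_event_vimage) auto
  have A_Sigma: "A \<in> Sigma_D \<Gamma> S"
    using measurable_sets[OF restrict_measurable_coord_space[OF DS] B[folded sets_coord_space]]
    by (simp add: A_eq)
  have "(\<lambda>\<omega>. restrict \<omega> S) -` A \<inter> Omega \<Gamma> S = A"
    using sets.sets_into_space[of A "coord_space \<Gamma> S"] A_Sigma
    by (auto simp: Omega_def PiE_iff extensional_restrict)
  then have "measure (Pphi p \<Gamma> S \<phi>) A = measure path_measure A"
    using measure_Pphi_vimage_restrict[OF u order_refl A_Sigma] by simp
  also have "\<dots> = measure (Pphi p \<Gamma> D \<phi>) (restr_event \<Gamma> D A)"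
    unfolding restr_A using measure_Pphi_vimage_restrict[OF u DS B] A_eq by simp
  finally show ?thesis .
qed

end

theorem lemma8:
  fixes S D :: "'s set" and \<Gamma> :: "'s \<Rightarrow> 'a set"
    and p :: "'s \<Rightarrow> 'a \<Rightarrow> ('h::chilbert_space \<Rightarrow> 'h)"
    and A :: "('s \<Rightarrow> 'a) set"
  assumes countable: "\<And>t. t \<in> S \<Longrightarrow> countable (\<Gamma> t)"
    and proj: "\<And>t a. t \<in> S \<Longrightarrow> a \<in> \<Gamma> t \<Longrightarrow> is_projection (p t a)"
    and resolution: "\<And>t \<phi>. t \<in> S \<Longrightarrow> ((\<lambda>a. p t a \<phi>) has_sum \<phi>) (\<Gamma> t)"
    and DS: "D \<subseteq> S"
    and A: "A \<in> Sigma_sup \<Gamma> S D"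
  shows "Hev p \<Gamma> S A = Hev p \<Gamma> D (restr_event \<Gamma> D A) \<inter> Hcomm (pfam p \<Gamma> S)"
proof -
  have measure_eq: "measure (Pphi p \<Gamma> S \<phi>) A = measure (Pphi p \<Gamma> D \<phi>) (restr_event \<Gamma> D A)"
    if \<phi>: "commutes_on (pfam p \<Gamma> S) \<phi>" "\<phi> \<noteq> 0" for \<phi>
  proof -
    have "is_projection f" if "f \<in> pfam p \<Gamma> S" for f
      using that proj unfolding pfam_def by blast
    then have "commutes_on (pfam p \<Gamma> S) (unitvec \<phi>)"
      unfolding unitvec_def using \<phi>(1) by (intro commutes_on_scaleC)
    then interpret commuting_state S \<Gamma> p "unitvec \<phi>"
      using countable proj resolution norm_unitvec[OF \<phi>(2)] by unfold_locales
    show ?thesis by (rule measure_Pphi_restr_event[OF refl DS A])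
  qed
  have pfam_mono: "pfam p \<Gamma> D \<subseteq> pfam p \<Gamma> S" using DS unfolding pfam_def by blast
  have commutes_D: "commutes_on (pfam p \<Gamma> D) \<phi>" if "commutes_on (pfam p \<Gamma> S) \<phi>" for \<phi>
    by (rule commutes_on_mono[OF that pfam_mono])
  show ?thesis
  proof (intro set_eqI)
    fix \<phi>
    show "\<phi> \<in> Hev p \<Gamma> S A \<longleftrightarrow> \<phi> \<in> Hev p \<Gamma> D (restr_event \<Gamma> D A) \<inter> Hcomm (pfam p \<Gamma> S)"
      using commutes_D[of \<phi>] measure_eq[of \<phi>] by (cases "\<phi> = 0") (auto simp: Hev_def Hcomm_def)
  qed
qed

end
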